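(* Assume $\rho$ satisfies the Loss Kernel Assumption, let $\xi\ge0$, let $X^{(k)}\in\mathcal X$, and define for $X\in\mathbb R^{d\times(d+1)n}$ $$G(X\mid X^{(k)})=\sum_{\alpha\in\mathcal A}\sum_{(i,j)\in\vec{\mathcal E}^{\alpha\alpha}}F^{\alpha\alpha}_{ij}(X)+\sum_{\alpha\ne\beta}\sum_{(i,j)\in\vec{\mathcal E}^{\alpha\beta}}E^{\alpha\beta}_{ij}(X\mid X^{(k)})+\tfrac{\xi}{2}\|X-X^{(k)}\|^2 .$$ Then there exist positive semidefinite matrices $\Gamma^{\alpha(k)}\in\mathbb R^{(d+1)n_\alpha\times(d+1)n_\alpha}$, $\alpha\in\mathcal A$ (depending on $X^{(k)}$), such that, with $\Gamma^{(k)}=\mathrm{diag}(\Gamma^{1(k)},\dots,\Gamma^{|\mathcal A|(k)})$: (a) $G(X\mid X^{(k)})=\sum_{\alpha\in\mathcal A}G^\alpha(X^\alpha\mid X^{(k)})+F(X^{(k)})$, where $G^\alpha(X^\alpha\mid X^{(k)})=\frac12\|X^\alpha-X^{\alpha(k)}\|^2_{\Gamma^{\alpha(k)}}+\langle\nabla_{X^\alpha}F(X^{(k)}),X^\alpha-X^{\alpha(k)}\rangle$; (b) $G(X\mid X^{(k)})=\frac12\|X-X^{(k)}\|^2_{\Gamma^{(k)}}+\langle\nabla F(X^{(k)}),X-X^{(k)}\rangle+F(X^{(k)})$, and $G(X\mid X^{(k)})\ge F(X)$ for all $X$, with equality if $X=X^{(k)}$; (c) $\Gamma^{(k)}\succeq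 M^{(k)}$; (d) there is a constant PSD matrix $\Gamma\in\mathbb R^{(d+1)n\times(d+1)n}$, independent of $X^{(k)}$, with $\Gamma\succeq\Gamma^{(k)}$ for every $X^{(k)}\in\mathcal X$.
   Context: Setup. Fix an integer $d\ge 2$, a finite set of nodes $\mathcal A=\{1,\dots,|\mathcal A|\}$, positive integers $n_\alpha$ ($\alpha\in\mathcal A$) and $n=\sum_{\alpha}n_\alpha$. An element $X\in\mathbb R^{d\times(d+1)n}$ is written $X=[X^1\ \cdots\ X^{|\mathcal A|}]$ with $X^\alpha=[t^\alpha\ R^\alpha]\in\mathbb R^{d\times(d+1)n_\alpha}$, where $t^\alpha=[t^\alpha_1\ \cdots\ t^\alpha_{n_\alpha}]$ with $t^\alpha_i\in\mathbb R^d$ and $R^\alpha=[R^\alpha_1\ \cdots\ R^\alpha_{n_\alpha}]$ with $R^\alpha_i\in\mathbb R^{d\times d}$; write $X^\alpha_i=[t^\alpha_i\ R^\alpha_i]\in\mathbb R^{d\times(d+1)}$. The feasible set is $\mathcal X=\{X:\ R^\alpha_i\in SO(d)\ \forall\alpha,i\}$; $X^{(k)}=[X^{1(k)}\ \cdots\ X^{|\mathcal A|(k)}]$. We use $\langle A,B\rangle=\mathrm{tr}(AB^\top)$, $\|\cdot\|$ the Frobenius norm, and for PSD $M$, $\|Y\|_M^2=\mathrm{tr}(YMY^\top)$. Data: for each ordered pair $(\alpha,\beta)\in\mathcal A\times\mathcal A$ (including $\alpha=\beta$) a finite set $\vec{\mathcal E}^{\alpha\beta}\subseteq\{1,\dots,n_\alpha\}\times\{1,\dots,n_\beta\}$,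 and for each $(i,j)\in\vec{\mathcal E}^{\alpha\beta}$ a rotation $\tilde R^{\alpha\beta}_{ij}\in SO(d)$, a vector $\tilde t^{\alpha\beta}_{ij}\in\mathbb R^d$ and weights $\kappa^{\alpha\beta}_{ij},\tau^{\alpha\beta}_{ij}\ge0$. For $(i,j)\in\vec{\mathcal E}^{\alpha\beta}$ define the quadratic form on $\mathbb R^{d\times(d+1)n}$ $$q^{\alpha\beta}_{ij}(X)=\kappa^{\alpha\beta}_{ij}\|R^\alpha_i\tilde R^{\alpha\beta}_{ij}-R^\beta_j\|^2+\tau^{\alpha\beta}_{ij}\|R^\alpha_i\tilde t^{\alpha\beta}_{ij}+t^\alpha_i-t^\beta_j\|^2 .$$ Loss Kernel Assumption: $\rho:\mathbb R^+\to\mathbb R$ ($\mathbb R^+=[0,\infty)$) satisfies (a) $\rho(s)\ge0$ with equality iff $s=0$; (b) $\rho$ is continuously differentiable on $\mathbb R^+$; (c) $\rho$ is concave; (d) $0\le\rho'(s)\le1$ for all $s\ge0$ and $\rho'(0)=1$; (e) $\varphi(X)=\rho(\|X\|^2)$ has Lipschitz continuous gradient on $\mathbb R^{m\times n}$. Define $F^{\alpha\alpha}_{ij}(X)=\frac12q^{\alpha\alpha}_{ij}(X)$ for $(i,j)\in\vec{\mathcal E}^{\alpha\alpha}$ and $F^{\alpha\beta}_{ij}(X)=\frac12\rho\big(q^{\alpha\beta}_{ij}(X)\big)$ for $\alpha\ne\beta$, $(i,j)\in\vec{\mathcal E}^{\alpha\beta}$ (defined on all of $\mathbb R^{d\times(d+1)n}$),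 and the objective $$F(X)=\sum_{\alpha\in\mathcal A}\sum_{(i,j)\in\vec{\mathcal E}^{\alpha\alpha}}F^{\alpha\alpha}_{ij}(X)+\sum_{\alpha\ne\beta}\sum_{(i,j)\in\vec{\mathcal E}^{\alpha\beta}}F^{\alpha\beta}_{ij}(X).$$ $\nabla$ denotes the Euclidean gradient and $\nabla_{X^\alpha}$ the partial gradient w.r.t. the block $X^\alpha$. Weights: $\omega^{\alpha\beta(k)}_{ij}=1$ if $\alpha=\beta$ and $\omega^{\alpha\beta(k)}_{ij}=\rho'\big(q^{\alpha\beta}_{ij}(X^{(k)})\big)$ if $\alpha\neq\beta$. Decoupled quadratic form: for $(i,j)\in\vec{\mathcal E}^{\alpha\beta}$, $$p^{\alpha\beta}_{ij}(X)=2\Big(\kappa^{\alpha\beta}_{ij}\|R^\alpha_i\|^2+\kappa^{\alpha\beta}_{ij}\|R^\beta_j\|^2+\tau^{\alpha\beta}_{ij}\|R^\alpha_i\tilde t^{\alpha\beta}_{ij}+t^\alpha_i\|^2+\tau^{\alpha\beta}_{ij}\|t^\beta_j\|^2\Big),$$ and $E^{\alpha\beta}_{ij}(X\mid X^{(k)})=\tfrac12\omega^{\alpha\beta(k)}_{ij}\,p^{\alpha\beta}_{ij}(X-X^{(k)})+\langle\nabla F^{\alpha\beta}_{ij}(X^{(k)}),X-X^{(k)}\rangle+F^{\alpha\beta}_{ij}(X^{(k)})$. The PSD matrix $M^{(k)}\in\mathbb R^{(d+1)n\times(d+1)n}$ is defined by $\|Y\|^2_{M^{(k)}}=\sum_{\alpha}\sum_{(i,j)\in\vec{\mathcal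 E}^{\alpha\alpha}}q^{\alpha\alpha}_{ij}(Y)+\sum_{\alpha\ne\beta}\sum_{(i,j)\in\vec{\mathcal E}^{\alpha\beta}}\omega^{\alpha\beta(k)}_{ij}q^{\alpha\beta}_{ij}(Y)$ for all $Y$. *)

theory Defs
  imports "HOL-Analysis.Convex" "Jordan_Normal_Form.Determinant"
begin

definition mat_inner :: "real mat \<Rightarrow> real mat \<Rightarrow> real" where
  "mat_inner A B = (\<Sum>i<dim_row A. \<Sum>j<dim_col A. A $$ (i,j) * B $$ (i,j))"

definition fro_sq :: "real mat \<Rightarrow> real" where
  "fro_sq A = mat_inner A A"

definition fro_norm :: "real mat \<Rightarrow> real" where
  "fro_norm A = sqrt (fro_sq A)"

definition vec_sq :: "real vec \<Rightarrow> real" where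
  "vec_sq v = v \<bullet> v"

definition wnorm_sq :: "real mat \<Rightarrow> real mat \<Rightarrow> real" where
  "wnorm_sq M Y = mat_inner (Y * M) Y"

definition psd :: "nat \<Rightarrow> real mat \<Rightarrow> bool" where
  "psd n A \<longleftrightarrow> A \<in> carrier_mat n n \<and> transpose_mat A = A \<and>
     (\<forall>v \<in> carrier_vec n. 0 \<le> v \<bullet> (A *\<^sub>v v))"

definition loewner_ge :: "nat \<Rightarrow> real mat \<Rightarrow> real mat \<Rightarrow> bool" where
  "loewner_ge n A B \<longleftrightarrow> psd n (A - B)"

definition SO :: "nat \<Rightarrow> real mat set" where
  "SO d = {R \<in> carrier_mat d d. R * transpose_mat R = 1\<^sub>m d \<and> det R = 1}"

text \<open>Euclidean gradient of f at X on R^{m x n}: the matrix D such that every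
directional derivative equals the Frobenius inner product with D.  (Unique if it exists.)\<close>
definition is_mgrad :: "nat \<Rightarrow> nat \<Rightarrow> (real mat \<Rightarrow> real) \<Rightarrow> real mat \<Rightarrow> real mat \<Rightarrow> bool" where
  "is_mgrad m n f X D \<longleftrightarrow> D \<in> carrier_mat m n \<and>
     (\<forall>H \<in> carrier_mat m n.
        ((\<lambda>s. f (X + s \<cdot>\<^sub>m H)) has_real_derivative mat_inner D H) (at 0))"

definition mgrad :: "nat \<Rightarrow> nat \<Rightarrow> (real mat \<Rightarrow> real) \<Rightarrow> real mat \<Rightarrow> real mat" where
  "mgrad m n f X = (SOME D. is_mgrad m n f X D)"

definition loss_kernel :: "(real \<Rightarrow> real) \<Rightarrow> (real \<Rightarrow> real) \<Rightarrow> bool" where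
  "loss_kernel rho rho' \<longleftrightarrow>
     (\<forall>s \<ge> 0. rho s \<ge> 0 \<and> (rho s = 0 \<longleftrightarrow> s = 0)) \<and>
     (\<forall>s \<ge> 0. (rho has_real_derivative rho' s) (at s within {0..})) \<and>
     continuous_on {0..} rho' \<and>
     concave_on {0..} rho \<and>
     (\<forall>s \<ge> 0. 0 \<le> rho' s \<and> rho' s \<le> 1) \<and> rho' 0 = 1 \<and>
     (\<forall>m n. (\<forall>X \<in> carrier_mat m n. \<exists>D. is_mgrad m n (\<lambda>Y. rho (fro_sq Y)) X D) \<and>
        (\<exists>L. \<forall>X \<in> carrier_mat m n. \<forall>Y \<in> carrier_mat m n.
           fro_norm (mgrad m n (\<lambda>Z. rho (fro_sq Z)) X - mgrad m n (\<lambda>Z. rho (fro_sq Z)) Y)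
             \<le> L * fro_norm (X - Y)))"

text \<open>Nodes are 0,...,pA-1 (the paper's 1,...,|A|); poses of node a are 0,...,pn a - 1.
Edge data for the ordered pair (a,b) and edge (i,j).\<close>
record pgo_data =
  pd :: nat
  pA :: nat
  pn :: "nat \<Rightarrow> nat"
  pE :: "nat \<Rightarrow> nat \<Rightarrow> (nat \<times> nat) set"
  pRt :: "nat \<Rightarrow> nat \<Rightarrow> nat \<Rightarrow> nat \<Rightarrow> real mat"
  ptt :: "nat \<Rightarrow> nat \<Rightarrow> nat \<Rightarrow> nat \<Rightarrow> real vec"
  pkap :: "nat \<Rightarrow> nat \<Rightarrow> nat \<Rightarrow> nat \<Rightarrow> real"
  ptau :: "nat \<Rightarrow> nat \<Rightarrow> nat \<Rightarrow> nat \<Rightarrow> real"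

definition well_formed :: "pgo_data \<Rightarrow> bool" where
  "well_formed P \<longleftrightarrow> pd P \<ge> 2 \<and> (\<forall>a < pA P. pn P a > 0) \<and>
     (\<forall>a < pA P. \<forall>b < pA P. pE P a b \<subseteq> {..<pn P a} \<times> {..<pn P b} \<and>
        (\<forall>(i,j) \<in> pE P a b. pRt P a b i j \<in> SO (pd P) \<and> ptt P a b i j \<in> carrier_vec (pd P) \<and>
            pkap P a b i j \<ge> 0 \<and> ptau P a b i j \<ge> 0))"

definition ntot :: "pgo_data \<Rightarrow> nat" where
  "ntot P = (\<Sum>a<pA P. pn P a)"

definition ncols :: "pgo_data \<Rightarrow> nat" where
  "ncols P = (pd P + 1) * ntot P"

definition bdim :: "pgo_data \<Rightarrow> nat \<Rightarrow> nat" where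
  "bdim P a = (pd P + 1) * pn P a"

text \<open>Column offset of the block X^a in X = [X^0 ... X^(pA-1)].\<close>
definition boff :: "pgo_data \<Rightarrow> nat \<Rightarrow> nat" where
  "boff P a = (\<Sum>b<a. bdim P b)"

text \<open>Block X^a = [t^a R^a], a d x (d+1) n_a matrix.\<close>
definition blk :: "pgo_data \<Rightarrow> real mat \<Rightarrow> nat \<Rightarrow> real mat" where
  "blk P X a = mat (pd P) (bdim P a) (\<lambda>(r,c). X $$ (r, boff P a + c))"

definition tv :: "pgo_data \<Rightarrow> real mat \<Rightarrow> nat \<Rightarrow> nat \<Rightarrow> real vec" where
  "tv P X a i = vec (pd P) (\<lambda>r. X $$ (r, boff P a + i))"

definition Rm :: "pgo_data \<Rightarrow> real mat \<Rightarrow> nat \<Rightarrow> nat \<Rightarrow> real mat" where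
  "Rm P X a i = mat (pd P) (pd P) (\<lambda>(r,k). X $$ (r, boff P a + pn P a + pd P * i + k))"

definition feasible :: "pgo_data \<Rightarrow> real mat set" where
  "feasible P = {X \<in> carrier_mat (pd P) (ncols P). \<forall>a < pA P. \<forall>i < pn P a. Rm P X a i \<in> SO (pd P)}"

definition qf :: "pgo_data \<Rightarrow> nat \<Rightarrow> nat \<Rightarrow> nat \<Rightarrow> nat \<Rightarrow> real mat \<Rightarrow> real" where
  "qf P a b i j X =
     pkap P a b i j * fro_sq (Rm P X a i * pRt P a b i j - Rm P X b j) +
     ptau P a b i j * vec_sq (Rm P X a i *\<^sub>v ptt P a b i j + tv P X a i - tv P X b j)"

definition pf :: "pgo_data \<Rightarrow> nat \<Rightarrow> nat \<Rightarrow> nat \<Rightarrow> nat \<Rightarrow> real mat \<Rightarrow> real" where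
  "pf P a b i j X = 2 * (
     pkap P a b i j * fro_sq (Rm P X a i) + pkap P a b i j * fro_sq (Rm P X b j) +
     ptau P a b i j * vec_sq (Rm P X a i *\<^sub>v ptt P a b i j + tv P X a i) +
     ptau P a b i j * vec_sq (tv P X b j))"

definition Fij :: "pgo_data \<Rightarrow> (real \<Rightarrow> real) \<Rightarrow> nat \<Rightarrow> nat \<Rightarrow> nat \<Rightarrow> nat \<Rightarrow> real mat \<Rightarrow> real" where
  "Fij P rho a b i j X = (if a = b then qf P a b i j X / 2 else rho (qf P a b i j X) / 2)"

definition Fobj :: "pgo_data \<Rightarrow> (real \<Rightarrow> real) \<Rightarrow> real mat \<Rightarrow> real" where
  "Fobj P rho X =
     (\<Sum>a<pA P. \<Sum>(i,j) \<in> pE P a a. Fij P rho a a i j X) +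
     (\<Sum>a<pA P. \<Sum>b \<in> {..<pA P} - {a}. \<Sum>(i,j) \<in> pE P a b. Fij P rho a b i j X)"

definition omega :: "pgo_data \<Rightarrow> (real \<Rightarrow> real) \<Rightarrow> real mat \<Rightarrow> nat \<Rightarrow> nat \<Rightarrow> nat \<Rightarrow> nat \<Rightarrow> real" where
  "omega P rho' Xk a b i j = (if a = b then 1 else rho' (qf P a b i j Xk))"

definition gradX :: "pgo_data \<Rightarrow> (real mat \<Rightarrow> real) \<Rightarrow> real mat \<Rightarrow> real mat" where
  "gradX P f X = mgrad (pd P) (ncols P) f X"

definition Eij :: "pgo_data \<Rightarrow> (real \<Rightarrow> real) \<Rightarrow> (real \<Rightarrow> real) \<Rightarrow> nat \<Rightarrow> nat \<Rightarrow> nat \<Rightarrow> nat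
    \<Rightarrow> real mat \<Rightarrow> real mat \<Rightarrow> real" where
  "Eij P rho rho' a b i j X Xk =
     omega P rho' Xk a b i j * pf P a b i j (X - Xk) / 2 +
     mat_inner (gradX P (Fij P rho a b i j) Xk) (X - Xk) + Fij P rho a b i j Xk"

definition Gsur :: "pgo_data \<Rightarrow> (real \<Rightarrow> real) \<Rightarrow> (real \<Rightarrow> real) \<Rightarrow> real \<Rightarrow> real mat \<Rightarrow> real mat \<Rightarrow> real" where
  "Gsur P rho rho' xi X Xk =
     (\<Sum>a<pA P. \<Sum>(i,j) \<in> pE P a a. Fij P rho a a i j X) +
     (\<Sum>a<pA P. \<Sum>b \<in> {..<pA P} - {a}. \<Sum>(i,j) \<in> pE P a b. Eij P rho rho' a b i j X Xk) +
     xi / 2 * fro_sq (X - Xk)"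

text \<open>G^a(X^a | Xk) for a given matrix Gamma^a.  The partial gradient w.r.t. X^a is
the a-block of the Euclidean gradient.\<close>
definition Gblk :: "pgo_data \<Rightarrow> (real \<Rightarrow> real) \<Rightarrow> real mat \<Rightarrow> nat \<Rightarrow> real mat \<Rightarrow> real mat \<Rightarrow> real" where
  "Gblk P rho Gam a X Xk =
     wnorm_sq Gam (blk P X a - blk P Xk a) / 2 +
     mat_inner (blk P (gradX P (Fobj P rho) Xk) a) (blk P X a - blk P Xk a)"

definition Mk :: "pgo_data \<Rightarrow> (real \<Rightarrow> real) \<Rightarrow> real mat \<Rightarrow> real mat" where
  "Mk P rho' Xk = (SOME M. M \<in> carrier_mat (ncols P) (ncols P) \<and> transpose_mat M = M \<and>
     (\<forall>Y \<in> carrier_mat (pd P) (ncols P). wnorm_sq M Y =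
        (\<Sum>a<pA P. \<Sum>(i,j) \<in> pE P a a. qf P a a i j Y) +
        (\<Sum>a<pA P. \<Sum>b \<in> {..<pA P} - {a}. \<Sum>(i,j) \<in> pE P a b. omega P rho' Xk a b i j * qf P a b i j Y)))"

definition blockdiag :: "pgo_data \<Rightarrow> (nat \<Rightarrow> real mat) \<Rightarrow> real mat" where
  "blockdiag P Gs = diag_block_mat (map Gs [0..<pA P])"

end

theory Submission
  imports Defs
begin

text \<open>Every q^{ab}_{ij} is a quadratic form in X; summed over the d rows of X it is one fixed
  quadratic form of a row, so the terms of G that are quadratic in X - Xk are exact Taylor
  expansions and collect into one form of the rows of X - Xk, whose matrix is Gamma.  For edges
  between different nodes, concavity of rho gives rho (q X) \<le> rho (q Xk) + rho'(q Xk) (q X - q Xk),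
  and since the measured rotations are orthogonal, (x - y)^2 \<le> 2 x^2 + 2 y^2 gives q \<le> p;
  hence G majorizes F.  The form p has no cross terms between the two nodes of an edge, so the
  collected form splits into one form per node, i.e. Gamma is block diagonal.  Because the weights
  satisfy 0 \<le> omega \<le> 1, replacing them by 1 gives a majorant Gamma independent of Xk, and
  q \<le> p gives Gamma \<succeq> M.\<close>

section \<open>Quadratic forms in finitely many coordinates\<close>

definition linear_form :: "nat \<Rightarrow> ((nat \<Rightarrow> real) \<Rightarrow> real) \<Rightarrow> bool" where
  "linear_form N l \<longleftrightarrow> (\<exists>w. \<forall>v. l v = (\<Sum>k<N. w k * v k))"

definition quadratic_form :: "nat \<Rightarrow> ((nat \<Rightarrow> real) \<Rightarrow> real) \<Rightarrow> bool" where
  "quadratic_form N f \<longleftrightarrow> (\<exists>B. \<forall>v. f v = (\<Sum>k<N. \<Sum>l<N. v k * v l * B k l))"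

lemma linear_form_coord: "m < N \<Longrightarrow> linear_form N (\<lambda>v. v m)"
  unfolding linear_form_def
  by (intro exI[of _ "\<lambda>k. if k = m then 1 else 0"] allI)
    (simp add: if_distrib[of "\<lambda>x. x * _"] cong: if_cong)

lemma linear_form_zero: "linear_form N (\<lambda>v. 0)"
  unfolding linear_form_def by (rule exI[of _ "\<lambda>k. 0"]) simp

lemma linear_form_add:
  assumes "linear_form N f" "linear_form N g"
  shows "linear_form N (\<lambda>v. f v + g v)"
proof -
  obtain w1 w2 where "\<forall>v. f v = (\<Sum>k<N. w1 k * v k)" "\<forall>v. g v = (\<Sum>k<N. w2 k * v k)"
    using assms unfolding linear_form_def by blast
  then show ?thesis unfolding linear_form_def
    by (intro exI[of _ "\<lambda>k. w1 k + w2 k"]) (simp add: distrib_right sum.distrib)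
qed

lemma linear_form_scale: "linear_form N f \<Longrightarrow> linear_form N (\<lambda>v. c * f v)"
  unfolding linear_form_def
proof (elim exE)
  fix w assume "\<forall>v. f v = (\<Sum>k<N. w k * v k)"
  then show "\<exists>w. \<forall>v. c * f v = (\<Sum>k<N. w k * v k)"
    by (intro exI[of _ "\<lambda>k. c * w k"]) (simp add: sum_distrib_left mult.assoc)
qed

lemma linear_form_scale_right: "linear_form N f \<Longrightarrow> linear_form N (\<lambda>v. f v * c)"
  using linear_form_scale[of N f c] by (simp add: mult.commute)

lemma linear_form_diff: "linear_form N f \<Longrightarrow> linear_form N g \<Longrightarrow> linear_form N (\<lambda>v. f v - g v)"
  using linear_form_add[of N f "\<lambda>v. (-1) * g v"] linear_form_scale[of N g "-1"] by simp

lemma linear_form_sum: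
  "(\<And>x. x \<in> S \<Longrightarrow> linear_form N (f x)) \<Longrightarrow> linear_form N (\<lambda>v. \<Sum>x\<in>S. f x v)"
  by (induction S rule: infinite_finite_induct) (simp_all add: linear_form_zero linear_form_add)

lemma quadratic_form_zero: "quadratic_form N (\<lambda>v. 0)"
  unfolding quadratic_form_def by (rule exI[of _ "\<lambda>k l. 0"]) simp

lemma quadratic_form_add:
  assumes "quadratic_form N f" "quadratic_form N g"
  shows "quadratic_form N (\<lambda>v. f v + g v)"
proof -
  obtain B1 B2 where "\<forall>v. f v = (\<Sum>k<N. \<Sum>l<N. v k * v l * B1 k l)"
      "\<forall>v. g v = (\<Sum>k<N. \<Sum>l<N. v k * v l * B2 k l)"
    using assms unfolding quadratic_form_def by blast
  then show ?thesis unfolding quadratic_form_def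
    by (intro exI[of _ "\<lambda>k l. B1 k l + B2 k l"]) (simp add: distrib_left sum.distrib)
qed

lemma quadratic_form_scale: "quadratic_form N f \<Longrightarrow> quadratic_form N (\<lambda>v. c * f v)"
  unfolding quadratic_form_def
proof (elim exE)
  fix B assume "\<forall>v. f v = (\<Sum>k<N. \<Sum>l<N. v k * v l * B k l)"
  then show "\<exists>B. \<forall>v. c * f v = (\<Sum>k<N. \<Sum>l<N. v k * v l * B k l)"
    by (intro exI[of _ "\<lambda>k l. c * B k l"]) (simp add: sum_distrib_left ac_simps)
qed

lemma quadratic_form_diff:
  "quadratic_form N f \<Longrightarrow> quadratic_form N g \<Longrightarrow> quadratic_form N (\<lambda>v. f v - g v)"
  using quadratic_form_add[of N f "\<lambda>v. (-1) * g v"] quadratic_form_scale[of N g "-1"] by simp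

lemma quadratic_form_sum:
  "(\<And>x. x \<in> S \<Longrightarrow> quadratic_form N (f x)) \<Longrightarrow> quadratic_form N (\<lambda>v. \<Sum>x\<in>S. f x v)"
  by (induction S rule: infinite_finite_induct) (simp_all add: quadratic_form_zero quadratic_form_add)

lemma quadratic_form_power2: "linear_form N f \<Longrightarrow> quadratic_form N (\<lambda>v. (f v)\<^sup>2)"
  unfolding quadratic_form_def linear_form_def
proof (elim exE)
  fix w assume "\<forall>v. f v = (\<Sum>k<N. w k * v k)"
  then show "\<exists>B. \<forall>v. (f v)\<^sup>2 = (\<Sum>k<N. \<Sum>l<N. v k * v l * B k l)"
    by (intro exI[of _ "\<lambda>k l. w k * w l"]) (simp add: power2_eq_square sum_product ac_simps)
qed

lemma quadratic_form_cong:
  "quadratic_form N f \<Longrightarrow> (\<And>m. m < N \<Longrightarrow> v m = v' m) \<Longrightarrow> f v = f v'"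
  unfolding quadratic_form_def by auto

lemma quadratic_form_at_zero: "quadratic_form N f \<Longrightarrow> f (\<lambda>m. 0) = 0"
  unfolding quadratic_form_def by auto

lemma quadratic_form_expansion:
  assumes "quadratic_form N f"
  shows "\<exists>g. \<forall>u h s. f (\<lambda>m. u m + s * h m) = f u + s * (\<Sum>l<N. h l * g u l) + s\<^sup>2 * f h"
proof -
  obtain B where B: "\<And>v. f v = (\<Sum>k<N. \<Sum>l<N. v k * v l * B k l)"
    using assms unfolding quadratic_form_def by auto
  show ?thesis
  proof (intro exI allI)
    fix u h :: "nat \<Rightarrow> real" and s :: real
    have "(\<Sum>k<N. \<Sum>l<N. (u k + s * h k) * (u l + s * h l) * B k l) =
       (\<Sum>k<N. \<Sum>l<N. u k * u l * B k l) + s * (\<Sum>k<N. \<Sum>l<N. u k * h l * B k l)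
        + s * (\<Sum>k<N. \<Sum>l<N. h k * u l * B k l) + s\<^sup>2 * (\<Sum>k<N. \<Sum>l<N. h k * h l * B k l)"
      by (simp add: sum.distrib sum_distrib_left algebra_simps power2_eq_square)
    moreover have "(\<Sum>k<N. \<Sum>l<N. u k * h l * B k l) = (\<Sum>l<N. h l * (\<Sum>k<N. u k * B k l))"
      by (subst sum.swap) (simp add: sum_distrib_left ac_simps)
    moreover have "(\<Sum>k<N. \<Sum>l<N. h k * u l * B k l) = (\<Sum>l<N. h l * (\<Sum>k<N. u k * B l k))"
      by (simp add: sum_distrib_left ac_simps)
    ultimately show "f (\<lambda>m. u m + s * h m) =
        f u + s * (\<Sum>l<N. h l * (\<lambda>u l. \<Sum>k<N. u k * (B k l + B l k)) u l) + s\<^sup>2 * f h"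
      by (simp add: B sum.distrib distrib_left algebra_simps)
  qed
qed

lemma sum_lessThan_add:
  "(\<Sum>m<(x::nat) + y. (f m :: 'a::comm_monoid_add)) = (\<Sum>m<x. f m) + (\<Sum>m<y. f (x + m))"
  by (induction y) (auto simp: add.assoc)

lemma sum_lessThan_window:
  assumes "B + N \<le> (M::nat)"
  shows "(\<Sum>k<M. if B \<le> k \<and> k < B + N then g (k - B) else 0) = (\<Sum>k<N. g k)"
proof -
  obtain R where "M = B + N + R" using assms le_Suc_ex by blast
  then show ?thesis by (simp add: sum_lessThan_add)
qed

lemma sum_lessThan_blocks:
  "(\<Sum>c<(\<Sum>b<(A::nat). (sz b::nat)). (f c::real)) = (\<Sum>a<A. \<Sum>m<sz a. f ((\<Sum>b<a. sz b) + m))"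
  by (induction A) (simp_all add: sum_lessThan_add)

lemma block_offset_le: "a < A \<Longrightarrow> (\<Sum>b<a. sz b) + sz a \<le> (\<Sum>b<(A::nat). (sz b::nat))"
  using sum_mono2[of "{..<A}" "{..<Suc a}" sz] by simp

lemma quadratic_form_shift:
  assumes q: "quadratic_form N f" and BN: "B + N \<le> M"
  shows "quadratic_form M (\<lambda>v. f (\<lambda>m. v (B + m)))"
proof -
  obtain Bq where Bq: "\<And>v. f v = (\<Sum>k<N. \<Sum>l<N. v k * v l * Bq k l)"
    using q unfolding quadratic_form_def by auto
  let ?win = "\<lambda>k. B \<le> k \<and> k < B + N"
  define B' where "B' k l = (if ?win k \<and> ?win l then Bq (k - B) (l - B) else 0)" for k l
  show ?thesis unfolding quadratic_form_def
  proof (intro exI allI)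
    fix v :: "nat \<Rightarrow> real"
    have inner: "(\<Sum>l<M. v k * v l * B' k l) =
        (if ?win k then (\<Sum>l<N. v k * v (B + l) * Bq (k - B) l) else 0)" for k
    proof (cases "?win k")
      case True
      have "(\<Sum>l<M. v k * v l * B' k l) =
          (\<Sum>l<M. if ?win l then (\<lambda>l'. v k * v (B + l') * Bq (k - B) l') (l - B) else 0)"
        by (intro sum.cong refl) (auto simp: B'_def True)
      also have "\<dots> = (\<Sum>l<N. v k * v (B + l) * Bq (k - B) l)" by (rule sum_lessThan_window[OF BN])
      finally show ?thesis using True by simp
    next
      case False
      then have "B' k l = 0" for l unfolding B'_def by auto
      then show ?thesis using False by auto
    qed
    have "(\<Sum>k<M. \<Sum>l<M. v k * v l * B' k l) =
        (\<Sum>k<M. if ?win k then (\<lambda>k'. \<Sum>l<N. v (B + k') * v (B + l) * Bq k' l) (k - B) else 0)"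
      by (intro sum.cong refl) (auto simp: inner)
    also have "\<dots> = (\<Sum>k<N. \<Sum>l<N. v (B + k) * v (B + l) * Bq k l)" by (rule sum_lessThan_window[OF BN])
    finally show "f (\<lambda>m. v (B + m)) = (\<Sum>k<M. \<Sum>l<M. v k * v l * B' k l)" by (simp add: Bq)
  qed
qed

lemma quadratic_form_block_sum:
  fixes A :: nat and sz :: "nat \<Rightarrow> nat"
  assumes "\<forall>a<A. quadratic_form (sz a) (\<psi> a)"
  shows "quadratic_form (\<Sum>b<A. sz b) (\<lambda>v. \<Sum>a<A. \<psi> a (\<lambda>m. v ((\<Sum>b<a. sz b) + m)))"
proof (rule quadratic_form_sum)
  fix a assume "a \<in> {..<A}"
  then show "quadratic_form (\<Sum>b<A. sz b) (\<lambda>v. \<psi> a (\<lambda>m. v ((\<Sum>b<a. sz b) + m)))"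
    using assms block_offset_le[of a A sz] by (auto intro!: quadratic_form_shift)
qed

definition coord_unit :: "nat \<Rightarrow> nat \<Rightarrow> real" where
  "coord_unit k = (\<lambda>m. if m = k then 1 else 0)"

text \<open>The entries are obtained by polarization, so the matrix is symmetric by construction.\<close>

definition form_mat :: "nat \<Rightarrow> ((nat \<Rightarrow> real) \<Rightarrow> real) \<Rightarrow> real mat" where
  "form_mat N f = mat N N (\<lambda>(k,l).
     (f (\<lambda>m. coord_unit k m + coord_unit l m) - f (coord_unit k) - f (coord_unit l)) / 2)"

lemma form_mat_carrier [simp]: "form_mat N f \<in> carrier_mat N N"
  and dim_form_mat [simp]: "dim_row (form_mat N f) = N" "dim_col (form_mat N f) = N"
  unfolding form_mat_def by simp_all

lemma form_mat_index:
  "k < N \<Longrightarrow> l < N \<Longrightarrow> form_mat N f $$ (k,l) =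
     (f (\<lambda>m. coord_unit k m + coord_unit l m) - f (coord_unit k) - f (coord_unit l)) / 2"
  unfolding form_mat_def by simp

lemma transpose_form_mat: "transpose_mat (form_mat N f) = form_mat N f"
  by (rule eq_matI) (auto simp: form_mat_index add.commute)

lemma form_mat_diff: "form_mat N (\<lambda>v. f v - g v) = form_mat N f - form_mat N g"
  by (rule eq_matI) (auto simp: form_mat_index field_simps)

lemma sum_coord_unit: "l < N \<Longrightarrow> (\<Sum>j<N. coord_unit l j * g j) = g l"
  by (simp add: coord_unit_def if_distrib[of "\<lambda>x. x * _"] cong: if_cong)

lemma bilinear_sum_coord_unit:
  assumes "k < N" "l < N"
  shows "(\<Sum>i<N. \<Sum>j<N. coord_unit k i * coord_unit l j * B i j) = B k l"
proof -
  have "(\<Sum>i<N. \<Sum>j<N. coord_unit k i * coord_unit l j * B i j) =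
      (\<Sum>i<N. coord_unit k i * (\<Sum>j<N. coord_unit l j * B i j))"
    by (simp add: sum_distrib_left mult.assoc)
  then show ?thesis using assms by (simp add: sum_coord_unit)
qed

lemma polarization:
  assumes B: "\<And>v. f v = (\<Sum>k<N. \<Sum>l<N. v k * v l * B k l)" and kl: "k < N" "l < N"
  shows "(f (\<lambda>m. coord_unit k m + coord_unit l m) - f (coord_unit k) - f (coord_unit l)) / 2
      = (B k l + B l k) / 2"
proof -
  have "f (\<lambda>m. coord_unit k m + coord_unit l m) =
      (\<Sum>i<N. \<Sum>j<N. coord_unit k i * coord_unit k j * B i j)
      + (\<Sum>i<N. \<Sum>j<N. coord_unit k i * coord_unit l j * B i j)
      + (\<Sum>i<N. \<Sum>j<N. coord_unit l i * coord_unit k j * B i j)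
      + (\<Sum>i<N. \<Sum>j<N. coord_unit l i * coord_unit l j * B i j)"
    by (simp add: B algebra_simps sum.distrib)
  then show ?thesis using kl by (simp add: B bilinear_sum_coord_unit)
qed

lemma quadratic_form_eq_form_mat:
  assumes "quadratic_form N f"
  shows "f v = (\<Sum>k<N. \<Sum>l<N. v k * v l * form_mat N f $$ (k,l))"
proof -
  obtain B where B: "\<And>v. f v = (\<Sum>k<N. \<Sum>l<N. v k * v l * B k l)"
    using assms unfolding quadratic_form_def by auto
  have "(\<Sum>k<N. \<Sum>l<N. v k * v l * form_mat N f $$ (k,l)) =
      (\<Sum>k<N. \<Sum>l<N. v k * v l * B k l) / 2 + (\<Sum>k<N. \<Sum>l<N. v k * v l * B l k) / 2"
    by (simp add: form_mat_index polarization[OF B] sum_divide_distrib sum.distrib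
        add_divide_distrib distrib_left)
  also have "(\<Sum>k<N. \<Sum>l<N. v k * v l * B l k) = (\<Sum>k<N. \<Sum>l<N. v k * v l * B k l)"
    by (subst sum.swap) (simp add: ac_simps)
  finally show ?thesis using B[of v] by simp
qed

lemma scalar_prod_form_mat:
  assumes "quadratic_form N f" "v \<in> carrier_vec N"
  shows "v \<bullet> (form_mat N f *\<^sub>v v) = f (\<lambda>m. v $ m)"
  using assms(2)
  by (simp add: quadratic_form_eq_form_mat[OF assms(1), of "\<lambda>m. v $ m"] scalar_prod_def
      mult_mat_vec_def sum_distrib_left ac_simps lessThan_atLeast0)

definition row_sum :: "nat \<Rightarrow> ((nat \<Rightarrow> real) \<Rightarrow> real) \<Rightarrow> real mat \<Rightarrow> real" where
  "row_sum d f X = (\<Sum>r<d. f (\<lambda>m. X $$ (r,m)))"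

lemma wnorm_sq_form_mat:
  assumes q: "quadratic_form N f" and Y: "Y \<in> carrier_mat d N"
  shows "wnorm_sq (form_mat N f) Y = row_sum d f Y"
proof -
  have "wnorm_sq (form_mat N f) Y =
      (\<Sum>r<d. \<Sum>c<N. \<Sum>k<N. Y $$ (r,k) * Y $$ (r,c) * form_mat N f $$ (k,c))"
    using Y unfolding wnorm_sq_def mat_inner_def
    by (intro sum.cong refl)
      (auto simp: scalar_prod_def atLeast0LessThan sum_distrib_left sum_distrib_right ac_simps)
  also have "\<dots> = row_sum d f Y"
    unfolding row_sum_def
    by (intro sum.cong refl) (subst sum.swap, simp add: quadratic_form_eq_form_mat[OF q])
  finally show ?thesis .
qed

lemma psd_form_mat:
  assumes "quadratic_form N f" "\<And>v. f v \<ge> 0"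
  shows "psd N (form_mat N f)"
  unfolding psd_def using assms by (simp add: transpose_form_mat scalar_prod_form_mat)

lemma loewner_ge_form_mat:
  assumes "quadratic_form N f" "quadratic_form N g" "\<And>v. g v \<le> f v"
  shows "loewner_ge N (form_mat N f) (form_mat N g)"
  unfolding loewner_ge_def form_mat_diff[symmetric]
  by (rule psd_form_mat) (use assms in \<open>auto intro: quadratic_form_diff\<close>)

lemma loewner_ge_form_mat_left:
  assumes q: "quadratic_form N f" and M: "M \<in> carrier_mat N N" "transpose_mat M = M"
    and le: "\<And>v. v \<in> carrier_vec N \<Longrightarrow> v \<bullet> (M *\<^sub>v v) \<le> f (\<lambda>m. v $ m)"
  shows "loewner_ge N (form_mat N f) M"
  unfolding loewner_ge_def psd_def
proof (intro conjI ballI)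
  show "form_mat N f - M \<in> carrier_mat N N" using M(1) by (rule minus_carrier_mat)
  show "transpose_mat (form_mat N f - M) = form_mat N f - M"
    using transpose_minus[OF form_mat_carrier M(1)] M(2) by (simp add: transpose_form_mat)
  fix v :: "real vec" assume v: "v \<in> carrier_vec N"
  have "v \<bullet> ((form_mat N f - M) *\<^sub>v v) = v \<bullet> (form_mat N f *\<^sub>v v) - v \<bullet> (M *\<^sub>v v)"
    unfolding minus_mult_distrib_mat_vec[OF form_mat_carrier M(1) v]
    by (rule scalar_prod_minus_distrib[OF v mult_mat_vec_carrier[OF form_mat_carrier v]
          mult_mat_vec_carrier[OF M(1) v]])
  then show "0 \<le> v \<bullet> ((form_mat N f - M) *\<^sub>v v)"
    using le[OF v] scalar_prod_form_mat[OF q v] by simp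
qed

definition first_row_mat :: "nat \<Rightarrow> nat \<Rightarrow> real vec \<Rightarrow> real mat" where
  "first_row_mat d N v = mat d N (\<lambda>(r,m). if r = 0 then v $ m else 0)"

lemma scalar_prod_eq_wnorm_sq_first_row:
  assumes "M \<in> carrier_mat N N" "v \<in> carrier_vec N" "0 < d"
  shows "v \<bullet> (M *\<^sub>v v) = wnorm_sq M (first_row_mat d N v)"
proof -
  have "wnorm_sq M (first_row_mat d N v) =
      (\<Sum>r<d. if r = 0 then (\<Sum>c<N. (\<Sum>k<N. v $ k * M $$ (k,c)) * v $ c) else 0)"
    using assms unfolding wnorm_sq_def mat_inner_def first_row_mat_def
    by (intro sum.cong refl) (auto simp: scalar_prod_def atLeast0LessThan)
  also have "\<dots> = v \<bullet> (M *\<^sub>v v)"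
    using assms
    by (simp add: scalar_prod_def mult_mat_vec_def sum_distrib_left sum_distrib_right ac_simps
        atLeast0LessThan, subst sum.swap, simp add: mult.left_commute)
  finally show ?thesis by simp
qed

lemma diag_block_mat_form_mat:
  fixes A :: nat and sz :: "nat \<Rightarrow> nat"
  assumes "\<forall>a<A. quadratic_form (sz a) (\<psi> a)"
  shows "diag_block_mat (map (\<lambda>a. form_mat (sz a) (\<psi> a)) [0..<A]) =
         form_mat (\<Sum>b<A. sz b) (\<lambda>v. \<Sum>a<A. \<psi> a (\<lambda>m. v ((\<Sum>b<a. sz b) + m)))"
  using assms
proof (induction A)
  case 0
  show ?case by (rule eq_matI) auto
next
  case (Suc A)
  define Of where "Of = (\<Sum>b<A. sz b)"
  define S where "S = sz A"
  define Psi where "Psi = (\<lambda>v. \<Sum>a<A. \<psi> a (\<lambda>m. v ((\<Sum>b<a. sz b) + m)))"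
  have qA: "quadratic_form S (\<psi> A)" using Suc.prems S_def by auto
  have qP: "quadratic_form Of Psi"
    unfolding Of_def Psi_def by (rule quadratic_form_block_sum) (use Suc.prems in auto)
  have IH: "diag_block_mat (map (\<lambda>a. form_mat (sz a) (\<psi> a)) [0..<A]) = form_mat Of Psi"
    unfolding Of_def Psi_def by (rule Suc.IH) (use Suc.prems in auto)
  note cP = quadratic_form_cong[OF qP] and cA = quadratic_form_cong[OF qA]
  \<comment> \<open>Each summand only sees its own window of coordinates.\<close>
  have P1: "Psi (\<lambda>m. coord_unit i m + coord_unit j m) = Psi (coord_unit i)" if "j \<ge> Of" for i j
    by (rule cP) (use that in \<open>auto simp: coord_unit_def\<close>)
  have P2: "Psi (\<lambda>m. coord_unit i m + coord_unit j m) = Psi (coord_unit j)" if "i \<ge> Of" for i j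
    by (rule cP) (use that in \<open>auto simp: coord_unit_def\<close>)
  have P0: "Psi (coord_unit j) = 0" if "j \<ge> Of" for j
    using cP[of "coord_unit j" "\<lambda>m. 0"] quadratic_form_at_zero[OF qP] that
    by (auto simp: coord_unit_def)
  have A0: "\<psi> A (\<lambda>m. coord_unit i (Of + m)) = 0" if "i < Of" for i
    using cA[of "\<lambda>m. coord_unit i (Of + m)" "\<lambda>m. 0"] quadratic_form_at_zero[OF qA] that
    by (auto simp: coord_unit_def)
  have A1: "\<psi> A (\<lambda>m. coord_unit i (Of + m) + coord_unit j (Of + m)) = \<psi> A (\<lambda>m. coord_unit j (Of + m))"
    if "i < Of" for i j
    by (rule cA) (use that in \<open>auto simp: coord_unit_def\<close>)
  have A2: "\<psi> A (\<lambda>m. coord_unit i (Of + m) + coord_unit j (Of + m)) = \<psi> A (\<lambda>m. coord_unit i (Of + m))"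
    if "j < Of" for i j
    by (rule cA) (use that in \<open>auto simp: coord_unit_def\<close>)
  have A3: "\<psi> A (\<lambda>m. coord_unit i (Of + m)) = \<psi> A (coord_unit (i - Of))" if "i \<ge> Of" for i
    by (rule cA) (use that in \<open>auto simp: coord_unit_def\<close>)
  have A4: "\<psi> A (\<lambda>m. coord_unit i (Of + m) + coord_unit j (Of + m)) =
      \<psi> A (\<lambda>m. coord_unit (i - Of) m + coord_unit (j - Of) m)" if "i \<ge> Of" "j \<ge> Of" for i j
    by (rule cA) (use that in \<open>auto simp: coord_unit_def\<close>)
  have "diag_block_mat (map (\<lambda>a. form_mat (sz a) (\<psi> a)) [0..<Suc A]) =
      four_block_mat (form_mat Of Psi) (0\<^sub>m Of S) (0\<^sub>m S Of) (form_mat S (\<psi> A))"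
    by (simp add: S_def diag_block_mat_last Let_def IH)
  also have "\<dots> = form_mat (Of + S) (\<lambda>v. Psi v + \<psi> A (\<lambda>m. v (Of + m)))"
    by (rule eq_matI) (auto simp: form_mat_index P1 P2 P0 A0 A1 A2 A3 A4 not_less)
  finally show ?case by (simp add: Psi_def Of_def S_def)
qed

section \<open>Tangent lines of concave functions\<close>

lemma concave_on_le_tangent:
  fixes f :: "real \<Rightarrow> real"
  assumes cv: "concave_on A f" and df: "(f has_real_derivative f') (at s within A)"
    and s: "s \<in> A" and t: "t \<in> A"
  shows "f t \<le> f s + f' * (t - s)"
proof -
  define seg where "seg h = s + h * (t - s)" for h
  define g where "g = f \<circ> seg"
  have seg_convex: "seg h = (1 - h) *\<^sub>R s + h *\<^sub>R t" for h
    unfolding seg_def by (simp add: algebra_simps)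
  have seg_in: "seg ` {0..1} \<subseteq> A"
    using convexD[OF concave_on_imp_convex[OF cv] s t] by (auto simp: seg_convex)
  have chord: "g h \<ge> (1 - h) * f s + h * f t" if "0 \<le> h" "h \<le> 1" for h
    using concave_onD[OF cv, of h s t] that s t by (simp add: g_def seg_convex)
  have "(seg has_real_derivative (t - s)) (at 0 within {0..1})"
    unfolding seg_def by (auto intro!: derivative_eq_intros)
  moreover have "(f has_real_derivative f') (at (seg 0) within seg ` {0..1})"
    using has_field_derivative_subset[OF df seg_in] by (simp add: seg_def)
  ultimately have "(g has_real_derivative f' * (t - s)) (at 0 within {0..1})"
    unfolding g_def using DERIV_image_chain by (metis mult.commute)
  moreover have "at (0::real) within {0..1} = at_right 0" by (rule at_within_Icc_at_right) simp
  ultimately have lim: "((\<lambda>y. (g y - g 0) / y) \<longlongrightarrow> f' * (t - s)) (at_right 0)"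
    unfolding has_field_derivative_iff by simp
  have "eventually (\<lambda>y. f t - f s \<le> (g y - g 0) / y) (at_right 0)"
    unfolding eventually_at_right_field
  proof (intro exI[of _ 1] conjI allI impI)
    fix y :: real assume y: "0 < y" "y < 1"
    have "g 0 = f s" by (simp add: g_def seg_def)
    then show "f t - f s \<le> (g y - g 0) / y"
      using chord[of y] y by (simp add: field_simps)
  qed simp
  then have "f t - f s \<le> f' * (t - s)" by (rule tendsto_lowerbound[OF lim]) simp
  then show ?thesis by simp
qed

section \<open>Gradients as linear functionals\<close>

definition has_mderiv ::
    "nat \<Rightarrow> nat \<Rightarrow> (real mat \<Rightarrow> real) \<Rightarrow> real mat \<Rightarrow> (real mat \<Rightarrow> real) \<Rightarrow> bool" where
  "has_mderiv d N f X L \<longleftrightarrow>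
     (\<exists>D. is_mgrad d N f X D \<and> (\<forall>H\<in>carrier_mat d N. mat_inner D H = L H))"

lemma mat_inner_carrier:
  "D \<in> carrier_mat d N \<Longrightarrow> mat_inner D H = (\<Sum>r<d. \<Sum>l<N. D $$ (r,l) * H $$ (r,l))"
  unfolding mat_inner_def by simp

lemma mat_inner_smult: "mat_inner (c \<cdot>\<^sub>m D) H = c * mat_inner D H"
  unfolding mat_inner_def by (simp add: sum_distrib_left ac_simps)

lemma mat_inner_zero_right: "D \<in> carrier_mat d N \<Longrightarrow> mat_inner D (0\<^sub>m d N) = 0"
  unfolding mat_inner_def by (intro sum.neutral ballI) auto

lemma mat_inner_add:
  "D1 \<in> carrier_mat d N \<Longrightarrow> D2 \<in> carrier_mat d N \<Longrightarrow>
     mat_inner (D1 + D2) H = mat_inner D1 H + mat_inner D2 H"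
  unfolding mat_inner_def by (simp add: sum.distrib distrib_right)

lemma has_mderiv_mgrad:
  assumes "has_mderiv d N f X L"
  shows "mgrad d N f X \<in> carrier_mat d N"
    and "H \<in> carrier_mat d N \<Longrightarrow> mat_inner (mgrad d N f X) H = L H"
proof -
  obtain D where D: "is_mgrad d N f X D" "\<And>H. H \<in> carrier_mat d N \<Longrightarrow> mat_inner D H = L H"
    using assms unfolding has_mderiv_def by blast
  have M: "is_mgrad d N f X (mgrad d N f X)"
    unfolding mgrad_def by (rule someI[of _ D]) (rule D(1))
  then show "mgrad d N f X \<in> carrier_mat d N" unfolding is_mgrad_def by auto
  assume H: "H \<in> carrier_mat d N"
  have "mat_inner (mgrad d N f X) H = mat_inner D H"
    using M D(1) H unfolding is_mgrad_def by (auto intro: DERIV_unique)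
  then show "mat_inner (mgrad d N f X) H = L H" using D(2)[OF H] by simp
qed

lemma has_mderiv_mgrad_self:
  assumes "has_mderiv d N f X L"
  shows "has_mderiv d N f X (mat_inner (mgrad d N f X))"
  using assms has_mderiv_mgrad(2)[OF assms] unfolding has_mderiv_def by metis

lemma has_mderiv_zero: "has_mderiv d N (\<lambda>Y. 0) X (\<lambda>H. 0)"
  unfolding has_mderiv_def is_mgrad_def
  by (intro exI[of _ "0\<^sub>m d N"]) (auto simp: mat_inner_def)

lemma has_mderiv_scale:
  assumes "has_mderiv d N f X L"
  shows "has_mderiv d N (\<lambda>Y. c * f Y) X (\<lambda>H. c * L H)"
proof -
  obtain D where D: "is_mgrad d N f X D" "\<And>H. H \<in> carrier_mat d N \<Longrightarrow> mat_inner D H = L H"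
    using assms unfolding has_mderiv_def by blast
  have "is_mgrad d N (\<lambda>Y. c * f Y) X (c \<cdot>\<^sub>m D)"
    using D(1) unfolding is_mgrad_def mat_inner_smult by (auto intro!: derivative_eq_intros)
  then show ?thesis
    unfolding has_mderiv_def using D(2) by (auto simp: mat_inner_smult)
qed

lemma has_mderiv_divide:
  "has_mderiv d N f X L \<Longrightarrow> has_mderiv d N (\<lambda>Y. f Y / c) X (\<lambda>H. L H / c)"
  using has_mderiv_scale[of d N f X L "1/c"] by simp

lemma has_mderiv_add:
  assumes "has_mderiv d N f X L" "has_mderiv d N g X K"
  shows "has_mderiv d N (\<lambda>Y. f Y + g Y) X (\<lambda>H. L H + K H)"
proof -
  obtain D where D: "is_mgrad d N f X D" "\<And>H. H \<in> carrier_mat d N \<Longrightarrow> mat_inner D H = L H"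
    using assms(1) unfolding has_mderiv_def by blast
  obtain E where E: "is_mgrad d N g X E" "\<And>H. H \<in> carrier_mat d N \<Longrightarrow> mat_inner E H = K H"
    using assms(2) unfolding has_mderiv_def by blast
  have DE: "D \<in> carrier_mat d N" "E \<in> carrier_mat d N"
    using D(1) E(1) unfolding is_mgrad_def by auto
  have "is_mgrad d N (\<lambda>Y. f Y + g Y) X (D + E)"
    using D(1) E(1) DE unfolding is_mgrad_def
    by (auto simp: mat_inner_add intro!: derivative_eq_intros)
  then show ?thesis
    unfolding has_mderiv_def using DE D(2) E(2) by (auto simp: mat_inner_add)
qed

lemma has_mderiv_sum:
  "(\<And>x. x \<in> S \<Longrightarrow> has_mderiv d N (f x) X (L x)) \<Longrightarrow>
     has_mderiv d N (\<lambda>Y. \<Sum>x\<in>S. f x Y) X (\<lambda>H. \<Sum>x\<in>S. L x H)"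
  by (induction S rule: infinite_finite_induct) (simp_all add: has_mderiv_zero has_mderiv_add)

lemma has_mderiv_compose_nonneg:
  assumes fL: "has_mderiv d N f X L" and X: "X \<in> carrier_mat d N"
    and dr: "(\<rho> has_real_derivative r) (at (f X) within {0..})"
    and nonneg: "\<And>Y. Y \<in> carrier_mat d N \<Longrightarrow> f Y \<ge> 0"
  shows "has_mderiv d N (\<lambda>Y. \<rho> (f Y)) X (\<lambda>H. r * L H)"
proof -
  obtain D where D: "is_mgrad d N f X D" "\<And>H. H \<in> carrier_mat d N \<Longrightarrow> mat_inner D H = L H"
    using fL unfolding has_mderiv_def by blast
  have "is_mgrad d N (\<lambda>Y. \<rho> (f Y)) X (r \<cdot>\<^sub>m D)"
    unfolding is_mgrad_def
  proof (intro conjI ballI)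
    show "r \<cdot>\<^sub>m D \<in> carrier_mat d N" using D(1) unfolding is_mgrad_def by auto
    fix H :: "real mat" assume H: "H \<in> carrier_mat d N"
    define g where "g s = f (X + s \<cdot>\<^sub>m H)" for s
    have "X + 0 \<cdot>\<^sub>m H = X" by (rule eq_matI) (use X H in auto)
    then have g0: "g 0 = f X" unfolding g_def by simp
    have dg: "(g has_real_derivative L H) (at 0 within UNIV)"
      using D H unfolding is_mgrad_def g_def by auto
    have "g ` UNIV \<subseteq> {0..}" unfolding g_def using nonneg X H by auto
    then have "(\<rho> has_real_derivative r) (at (g 0) within g ` UNIV)"
      using has_field_derivative_subset[OF dr] g0 by simp
    from DERIV_image_chain[OF this dg]
    show "((\<lambda>s. \<rho> (f (X + s \<cdot>\<^sub>m H))) has_real_derivative mat_inner (r \<cdot>\<^sub>m D) H) (at 0)"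
      unfolding g_def o_def mat_inner_smult using D(2)[OF H] by simp
  qed
  then show ?thesis unfolding has_mderiv_def using D(2) by (auto simp: mat_inner_smult)
qed

lemma row_sum_expansion:
  assumes q: "quadratic_form N f" and X: "X \<in> carrier_mat d N"
  obtains D where "D \<in> carrier_mat d N"
    and "\<And>H s. H \<in> carrier_mat d N \<Longrightarrow>
       row_sum d f (X + s \<cdot>\<^sub>m H) = row_sum d f X + s * mat_inner D H + s\<^sup>2 * row_sum d f H"
proof -
  obtain g where g: "\<And>u h s. f (\<lambda>m. u m + s * h m) = f u + s * (\<Sum>l<N. h l * g u l) + s\<^sup>2 * f h"
    using quadratic_form_expansion[OF q] by blast
  define D where "D = mat d N (\<lambda>(r,l). g (\<lambda>m. X $$ (r,m)) l)"
  have D: "D \<in> carrier_mat d N" unfolding D_def by simp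
  moreover have "row_sum d f (X + s \<cdot>\<^sub>m H) = row_sum d f X + s * mat_inner D H + s\<^sup>2 * row_sum d f H"
    if H: "H \<in> carrier_mat d N" for H s
  proof -
    have row: "f (\<lambda>m. (X + s \<cdot>\<^sub>m H) $$ (r,m)) = f (\<lambda>m. X $$ (r,m) + s * H $$ (r,m))" if "r < d" for r
      by (rule quadratic_form_cong[OF q]) (use X H that in auto)
    have "row_sum d f (X + s \<cdot>\<^sub>m H) = (\<Sum>r<d. f (\<lambda>m. X $$ (r,m))
        + s * (\<Sum>l<N. H $$ (r,l) * g (\<lambda>m. X $$ (r,m)) l) + s\<^sup>2 * f (\<lambda>m. H $$ (r,m)))"
      unfolding row_sum_def by (intro sum.cong refl) (simp add: row g)
    also have "\<dots> = row_sum d f X + s * mat_inner D H + s\<^sup>2 * row_sum d f H"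
      unfolding row_sum_def mat_inner_carrier[OF D]
      by (simp add: sum.distrib sum_distrib_left D_def ac_simps)
    finally show ?thesis .
  qed
  ultimately show ?thesis using that by blast
qed

lemma has_mderiv_row_sum:
  assumes q: "quadratic_form N f" and X: "X \<in> carrier_mat d N"
  obtains L where "has_mderiv d N (row_sum d f) X L"
    and "\<And>Y. Y \<in> carrier_mat d N \<Longrightarrow> row_sum d f Y = row_sum d f X + L (Y - X) + row_sum d f (Y - X)"
proof -
  obtain D where D: "D \<in> carrier_mat d N" and e: "\<And>H s. H \<in> carrier_mat d N \<Longrightarrow>
     row_sum d f (X + s \<cdot>\<^sub>m H) = row_sum d f X + s * mat_inner D H + s\<^sup>2 * row_sum d f H"
    using row_sum_expansion[OF q X] by blast
  have "has_mderiv d N (row_sum d f) X (mat_inner D)"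
    unfolding has_mderiv_def is_mgrad_def
  proof (intro exI conjI ballI)
    fix H :: "real mat" assume H: "H \<in> carrier_mat d N"
    have "((\<lambda>s. row_sum d f X + s * mat_inner D H + s\<^sup>2 * row_sum d f H)
        has_real_derivative mat_inner D H) (at 0)"
      by (auto intro!: derivative_eq_intros)
    then show "((\<lambda>s. row_sum d f (X + s \<cdot>\<^sub>m H)) has_real_derivative mat_inner D H) (at 0)"
      by (simp add: e[OF H])
  qed (use D in auto)
  moreover have "row_sum d f Y = row_sum d f X + mat_inner D (Y - X) + row_sum d f (Y - X)"
    if Y: "Y \<in> carrier_mat d N" for Y
  proof -
    have "X + 1 \<cdot>\<^sub>m (Y - X) = Y" by (rule eq_matI) (use X Y in auto)
    moreover have "Y - X \<in> carrier_mat d N" using X by (rule minus_carrier_mat)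
    ultimately show ?thesis using e[of "Y - X" 1] by simp
  qed
  ultimately show ?thesis using that by blast
qed

section \<open>The pose-graph terms as quadratic forms in the rows of X\<close>

definition rot_col :: "pgo_data \<Rightarrow> nat \<Rightarrow> nat \<Rightarrow> nat" where
  "rot_col P a i = pn P a + pd P * i"

text \<open>The terms of q and p that involve one row v of X; Ba and Bb are the column offsets
  of the blocks a and b.\<close>

definition qf_row :: "pgo_data \<Rightarrow> nat \<Rightarrow> nat \<Rightarrow> nat \<Rightarrow> nat \<Rightarrow> nat \<Rightarrow> nat \<Rightarrow> (nat \<Rightarrow> real) \<Rightarrow> real" where
  "qf_row P a b i j Ba Bb v =
     pkap P a b i j * (\<Sum>c<pd P. ((\<Sum>k<pd P. v (Ba + rot_col P a i + k) * pRt P a b i j $$ (k,c))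
                                   - v (Bb + rot_col P b j + c))\<^sup>2)
     + ptau P a b i j * ((\<Sum>k<pd P. v (Ba + rot_col P a i + k) * ptt P a b i j $ k)
                         + v (Ba + i) - v (Bb + j))\<^sup>2"

definition pf_row_src :: "pgo_data \<Rightarrow> nat \<Rightarrow> nat \<Rightarrow> nat \<Rightarrow> nat \<Rightarrow> nat \<Rightarrow> (nat \<Rightarrow> real) \<Rightarrow> real" where
  "pf_row_src P a b i j Ba v =
     2 * (pkap P a b i j * (\<Sum>c<pd P. (v (Ba + rot_col P a i + c))\<^sup>2)
          + ptau P a b i j * ((\<Sum>k<pd P. v (Ba + rot_col P a i + k) * ptt P a b i j $ k) + v (Ba + i))\<^sup>2)"

definition pf_row_tgt :: "pgo_data \<Rightarrow> nat \<Rightarrow> nat \<Rightarrow> nat \<Rightarrow> nat \<Rightarrow> nat \<Rightarrow> (nat \<Rightarrow> real) \<Rightarrow> real" where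
  "pf_row_tgt P a b i j Bb v =
     2 * (pkap P a b i j * (\<Sum>c<pd P. (v (Bb + rot_col P b j + c))\<^sup>2) + ptau P a b i j * (v (Bb + j))\<^sup>2)"

lemma fro_sq_sum_power2: "fro_sq M = (\<Sum>r<dim_row M. \<Sum>c<dim_col M. (M $$ (r,c))\<^sup>2)"
  unfolding fro_sq_def mat_inner_def by (simp add: power2_eq_square)

lemma fro_sq_nonneg: "0 \<le> fro_sq M"
  unfolding fro_sq_sum_power2 by (intro sum_nonneg) auto

lemma vec_sq_sum_power2: "vec_sq w = (\<Sum>r<dim_vec w. (w $ r)\<^sup>2)"
  unfolding vec_sq_def scalar_prod_def by (simp add: power2_eq_square atLeast0LessThan)

lemma qf_eq_row_sum:
  assumes "pRt P a b i j \<in> carrier_mat (pd P) (pd P)" "ptt P a b i j \<in> carrier_vec (pd P)"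
  shows "qf P a b i j Y = row_sum (pd P) (qf_row P a b i j (boff P a) (boff P b)) Y"
  using assms unfolding qf_def qf_row_def row_sum_def fro_sq_sum_power2 vec_sq_sum_power2
  by (simp add: Rm_def tv_def rot_col_def sum.distrib sum_distrib_left scalar_prod_def
      atLeast0LessThan ac_simps)

lemma pf_eq_row_sum:
  assumes "ptt P a b i j \<in> carrier_vec (pd P)"
  shows "pf P a b i j Y =
    row_sum (pd P) (\<lambda>v. pf_row_src P a b i j (boff P a) v + pf_row_tgt P a b i j (boff P b) v) Y"
  using assms unfolding pf_def pf_row_src_def pf_row_tgt_def row_sum_def
    fro_sq_sum_power2 vec_sq_sum_power2
  by (simp add: Rm_def tv_def rot_col_def sum.distrib sum_distrib_left scalar_prod_def
      atLeast0LessThan ac_simps)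

lemma sum_power2_mult_SO:
  assumes R: "R \<in> SO d"
  shows "(\<Sum>c<d. (\<Sum>k<d. x k * R $$ (k,c))\<^sup>2) = (\<Sum>k<d. (x k)\<^sup>2)"
proof -
  have Rc: "R \<in> carrier_mat d d" and RR: "R * transpose_mat R = 1\<^sub>m d"
    using R unfolding SO_def by auto
  have rows_orthonormal: "(\<Sum>c<d. R $$ (k,c) * R $$ (l,c)) = (if k = l then 1 else 0)"
    if "k < d" "l < d" for k l
  proof -
    have "(R * transpose_mat R) $$ (k,l) = (\<Sum>c<d. R $$ (k,c) * R $$ (l,c))"
      using Rc that by (simp add: scalar_prod_def atLeast0LessThan)
    then show ?thesis using RR that by simp
  qed
  have "(\<Sum>c<d. (\<Sum>k<d. x k * R $$ (k,c))\<^sup>2) =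
      (\<Sum>c<d. \<Sum>k<d. \<Sum>l<d. x k * x l * (R $$ (k,c) * R $$ (l,c)))"
    by (simp add: power2_eq_square sum_product ac_simps)
  also have "\<dots> = (\<Sum>k<d. \<Sum>c<d. \<Sum>l<d. x k * x l * (R $$ (k,c) * R $$ (l,c)))"
    by (rule sum.swap)
  also have "\<dots> = (\<Sum>k<d. \<Sum>l<d. x k * x l * (\<Sum>c<d. R $$ (k,c) * R $$ (l,c)))"
    by (rule sum.cong[OF refl]) (simp only: sum_distrib_left, rule sum.swap)
  also have "\<dots> = (\<Sum>k<d. (x k)\<^sup>2)"
    by (simp add: rows_orthonormal power2_eq_square if_distrib cong: if_cong)
  finally show ?thesis .
qed

lemma quadratic_form_qf_row:
  assumes "Ba + rot_col P a i + pd P \<le> N" "Bb + rot_col P b j + pd P \<le> N" "Ba + i < N" "Bb + j < N"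
  shows "quadratic_form N (qf_row P a b i j Ba Bb)"
  unfolding qf_row_def
  by (intro quadratic_form_add quadratic_form_scale quadratic_form_sum quadratic_form_power2
      linear_form_diff linear_form_add linear_form_sum linear_form_scale_right linear_form_coord;
      use assms in auto)

lemma quadratic_form_pf_row_src:
  assumes "Ba + rot_col P a i + pd P \<le> N" "Ba + i < N"
  shows "quadratic_form N (pf_row_src P a b i j Ba)"
  unfolding pf_row_src_def
  by (intro quadratic_form_add quadratic_form_scale quadratic_form_sum quadratic_form_power2
      linear_form_add linear_form_sum linear_form_scale_right linear_form_coord; use assms in auto)

lemma quadratic_form_pf_row_tgt:
  assumes "Bb + rot_col P b j + pd P \<le> N" "Bb + j < N"
  shows "quadratic_form N (pf_row_tgt P a b i j Bb)"
  unfolding pf_row_tgt_def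
  by (intro quadratic_form_add quadratic_form_scale quadratic_form_sum quadratic_form_power2
      linear_form_coord; use assms in auto)

lemma qf_row_nonneg: "pkap P a b i j \<ge> 0 \<Longrightarrow> ptau P a b i j \<ge> 0 \<Longrightarrow> qf_row P a b i j Ba Bb v \<ge> 0"
  unfolding qf_row_def by (intro add_nonneg_nonneg mult_nonneg_nonneg sum_nonneg) auto

lemma pf_row_src_nonneg:
  "pkap P a b i j \<ge> 0 \<Longrightarrow> ptau P a b i j \<ge> 0 \<Longrightarrow> pf_row_src P a b i j Ba v \<ge> 0"
  unfolding pf_row_src_def by (intro add_nonneg_nonneg mult_nonneg_nonneg sum_nonneg) auto

lemma pf_row_tgt_nonneg:
  "pkap P a b i j \<ge> 0 \<Longrightarrow> ptau P a b i j \<ge> 0 \<Longrightarrow> pf_row_tgt P a b i j Bb v \<ge> 0"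
  unfolding pf_row_tgt_def by (intro add_nonneg_nonneg mult_nonneg_nonneg sum_nonneg) auto

lemma power2_diff_le: "(x - y)\<^sup>2 \<le> 2 * x\<^sup>2 + 2 * (y::real)\<^sup>2"
  using sum_squares_ge_zero[of "x + y" 0] by (simp add: power2_eq_square algebra_simps)

text \<open>From (x - y)^2 \<le> 2 x^2 + 2 y^2, using that the measured rotation is orthogonal.\<close>

lemma qf_row_le_pf_rows:
  assumes "pkap P a b i j \<ge> 0" "ptau P a b i j \<ge> 0" "pRt P a b i j \<in> SO (pd P)"
  shows "qf_row P a b i j Ba Bb v \<le> pf_row_src P a b i j Ba v + pf_row_tgt P a b i j Bb v"
proof -
  let ?d = "pd P" and ?R = "pRt P a b i j"
  let ?x = "\<lambda>k. v (Ba + rot_col P a i + k)" and ?y = "\<lambda>c. v (Bb + rot_col P b j + c)"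
  have "(\<Sum>c<?d. ((\<Sum>k<?d. ?x k * ?R $$ (k,c)) - ?y c)\<^sup>2) \<le>
      (\<Sum>c<?d. 2 * (\<Sum>k<?d. ?x k * ?R $$ (k,c))\<^sup>2 + 2 * (?y c)\<^sup>2)"
    by (intro sum_mono power2_diff_le)
  also have "\<dots> = 2 * (\<Sum>k<?d. (?x k)\<^sup>2) + 2 * (\<Sum>c<?d. (?y c)\<^sup>2)"
    by (simp add: sum.distrib sum_distrib_left[symmetric] sum_power2_mult_SO[OF assms(3)])
  finally have rot: "(\<Sum>c<?d. ((\<Sum>k<?d. ?x k * ?R $$ (k,c)) - ?y c)\<^sup>2) \<le>
      2 * (\<Sum>k<?d. (?x k)\<^sup>2) + 2 * (\<Sum>c<?d. (?y c)\<^sup>2)" .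
  have trans: "((\<Sum>k<?d. ?x k * ptt P a b i j $ k) + v (Ba + i) - v (Bb + j))\<^sup>2 \<le>
      2 * ((\<Sum>k<?d. ?x k * ptt P a b i j $ k) + v (Ba + i))\<^sup>2 + 2 * (v (Bb + j))\<^sup>2"
    by (rule power2_diff_le)
  show ?thesis
    unfolding qf_row_def pf_row_src_def pf_row_tgt_def
    using mult_left_mono[OF rot assms(1)] mult_left_mono[OF trans assms(2)]
    by (simp add: algebra_simps)
qed

lemma qf_row_shift: "qf_row P a b i j 0 0 (\<lambda>m. v (B + m)) = qf_row P a b i j B B v"
  and pf_row_src_shift: "pf_row_src P a b i j 0 (\<lambda>m. v (B + m)) = pf_row_src P a b i j B v"
  and pf_row_tgt_shift: "pf_row_tgt P a b i j 0 (\<lambda>m. v (B + m)) = pf_row_tgt P a b i j B v"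
  unfolding qf_row_def pf_row_src_def pf_row_tgt_def by (simp_all add: add.assoc)

definition is_edge :: "pgo_data \<Rightarrow> nat \<Rightarrow> nat \<Rightarrow> nat \<Rightarrow> nat \<Rightarrow> bool" where
  "is_edge P a b i j \<longleftrightarrow> a < pA P \<and> b < pA P \<and> (i,j) \<in> pE P a b"

definition edge_sum :: "pgo_data \<Rightarrow> (nat \<Rightarrow> nat \<Rightarrow> nat \<Rightarrow> nat \<Rightarrow> real) \<Rightarrow> real" where
  "edge_sum P f = (\<Sum>a<pA P. \<Sum>(i,j)\<in>pE P a a. f a a i j) +
     (\<Sum>a<pA P. \<Sum>b\<in>{..<pA P} - {a}. \<Sum>(i,j)\<in>pE P a b. f a b i j)"

lemma edge_sum_cong:
  "(\<And>a b i j. is_edge P a b i j \<Longrightarrow> f a b i j = g a b i j) \<Longrightarrow> edge_sum P f = edge_sum P g"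
  unfolding edge_sum_def is_edge_def by (intro arg_cong2[where f="(+)"] sum.cong refl) auto

lemma edge_sum_mono:
  "(\<And>a b i j. is_edge P a b i j \<Longrightarrow> f a b i j \<le> g a b i j) \<Longrightarrow> edge_sum P f \<le> edge_sum P g"
  unfolding edge_sum_def is_edge_def by (intro add_mono sum_mono) auto

lemma edge_sum_add: "edge_sum P (\<lambda>a b i j. f a b i j + g a b i j) = edge_sum P f + edge_sum P g"
  unfolding edge_sum_def by (simp add: sum.distrib case_prod_unfold)

lemma edge_sum_divide: "edge_sum P (\<lambda>a b i j. f a b i j / c) = edge_sum P f / c"
  unfolding edge_sum_def by (simp add: sum_divide_distrib case_prod_unfold add_divide_distrib)

lemma edge_sum_sum: "edge_sum P (\<lambda>a b i j. \<Sum>r\<in>R. f r a b i j) = (\<Sum>r\<in>R. edge_sum P (f r))"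
  by (induction R rule: infinite_finite_induct) (simp_all add: edge_sum_add, simp_all add: edge_sum_def)

lemma edge_sum_if: "edge_sum P (\<lambda>a b i j. if a = b then f a b i j else g a b i j) =
   (\<Sum>a<pA P. \<Sum>(i,j)\<in>pE P a a. f a a i j) + (\<Sum>a<pA P. \<Sum>b\<in>{..<pA P} - {a}. \<Sum>(i,j)\<in>pE P a b. g a b i j)"
  unfolding edge_sum_def by (intro arg_cong2[where f="(+)"] sum.cong refl) auto

lemma has_mderiv_edge_sum:
  "(\<And>a b i j. is_edge P a b i j \<Longrightarrow> has_mderiv d N (f a b i j) X (L a b i j)) \<Longrightarrow>
     has_mderiv d N (\<lambda>Y. edge_sum P (\<lambda>a b i j. f a b i j Y)) X (\<lambda>H. edge_sum P (\<lambda>a b i j. L a b i j H))"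
  unfolding edge_sum_def case_prod_unfold
  by (intro has_mderiv_add has_mderiv_sum) (auto simp: is_edge_def)

lemma quadratic_form_edge_sum:
  "(\<And>a b i j. is_edge P a b i j \<Longrightarrow> quadratic_form N (f a b i j)) \<Longrightarrow>
     quadratic_form N (\<lambda>v. edge_sum P (\<lambda>a b i j. f a b i j v))"
  unfolding edge_sum_def case_prod_unfold
  by (intro quadratic_form_add quadratic_form_sum) (auto simp: is_edge_def)

lemma Fobj_eq_edge_sum: "Fobj P rho X = edge_sum P (\<lambda>a b i j. Fij P rho a b i j X)"
  unfolding Fobj_def edge_sum_def by simp

lemma Gsur_eq_edge_sum:
  "Gsur P rho rho' xi X Xk =
     edge_sum P (\<lambda>a b i j. if a = b then Fij P rho a b i j X else Eij P rho rho' a b i j X Xk)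
     + xi / 2 * fro_sq (X - Xk)"
  unfolding Gsur_def edge_sum_if by simp

lemma ncols_eq_sum_bdim: "ncols P = (\<Sum>b<pA P. bdim P b)"
  unfolding ncols_def ntot_def bdim_def by (simp add: sum_distrib_left)

lemma block_end_le_ncols: "a < pA P \<Longrightarrow> boff P a + bdim P a \<le> ncols P"
  unfolding ncols_eq_sum_bdim boff_def by (rule block_offset_le)

lemma rot_col_bound: "i < pn P a \<Longrightarrow> rot_col P a i + pd P \<le> bdim P a"
proof -
  assume "i < pn P a"
  then have "pd P * i + pd P \<le> pd P * pn P a"
    by (metis Suc_leI mult_Suc_right mult_le_mono2 add.commute)
  then show ?thesis unfolding rot_col_def bdim_def by simp
qed

lemma pose_col_bound: "i < pn P a \<Longrightarrow> i < bdim P a"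
  unfolding bdim_def by simp

lemma blk_carrier: "blk P X a \<in> carrier_mat (pd P) (bdim P a)"
  unfolding blk_def by simp

lemma is_edge_data:
  assumes "well_formed P" "is_edge P a b i j"
  shows "i < pn P a" "j < pn P b" "pRt P a b i j \<in> SO (pd P)" "ptt P a b i j \<in> carrier_vec (pd P)"
    "pkap P a b i j \<ge> 0" "ptau P a b i j \<ge> 0" "pRt P a b i j \<in> carrier_mat (pd P) (pd P)"
  using assms unfolding well_formed_def is_edge_def SO_def by blast+

lemma quadratic_form_qf_row_edge:
  assumes wf: "well_formed P" and e: "is_edge P a b i j"
  shows "quadratic_form (ncols P) (qf_row P a b i j (boff P a) (boff P b))"
proof (rule quadratic_form_qf_row)
  have "a < pA P" "b < pA P" using e unfolding is_edge_def by auto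
  note ends = block_end_le_ncols[OF this(1)] block_end_le_ncols[OF this(2)]
  note ij = is_edge_data(1,2)[OF wf e]
  show "boff P a + rot_col P a i + pd P \<le> ncols P" using rot_col_bound[OF ij(1)] ends by simp
  show "boff P b + rot_col P b j + pd P \<le> ncols P" using rot_col_bound[OF ij(2)] ends by simp
  show "boff P a + i < ncols P" using pose_col_bound[OF ij(1)] ends by simp
  show "boff P b + j < ncols P" using pose_col_bound[OF ij(2)] ends by simp
qed

lemma qf_eq_row_sum_edge:
  assumes "well_formed P" "is_edge P a b i j"
  shows "qf P a b i j = row_sum (pd P) (qf_row P a b i j (boff P a) (boff P b))"
  using qf_eq_row_sum[OF is_edge_data(7,4)[OF assms]] by blast

lemma qf_nonneg:
  assumes "well_formed P" "is_edge P a b i j"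
  shows "qf P a b i j Y \<ge> 0"
  unfolding qf_def fro_sq_sum_power2 vec_sq_sum_power2 using is_edge_data(5,6)[OF assms]
  by (intro add_nonneg_nonneg mult_nonneg_nonneg sum_nonneg) auto

lemma qf_le_pf:
  assumes "well_formed P" "is_edge P a b i j"
  shows "qf P a b i j Y \<le> pf P a b i j Y"
  unfolding qf_eq_row_sum[OF is_edge_data(7,4)[OF assms]] pf_eq_row_sum[OF is_edge_data(4)[OF assms]]
    row_sum_def
  by (intro sum_mono qf_row_le_pf_rows is_edge_data[OF assms])

lemma omega_bounds:
  assumes "well_formed P" "loss_kernel rho rho'" "is_edge P a b i j"
  shows "0 \<le> omega P rho' Xk a b i j" "omega P rho' Xk a b i j \<le> 1"
  using assms(2) qf_nonneg[OF assms(1,3), of Xk] unfolding omega_def loss_kernel_def by auto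

section \<open>The majorizing quadratic form and its blocks\<close>

text \<open>With the weights W = omega, the matrix of block_form P W xi a is the paper's Gamma^a:
  node a collects the q-terms of its internal edges, for each edge between a and another
  node the part of p belonging to a, and the proximal term xi |.|^2.\<close>

definition block_form ::
    "pgo_data \<Rightarrow> (nat \<Rightarrow> nat \<Rightarrow> nat \<Rightarrow> nat \<Rightarrow> real) \<Rightarrow> real \<Rightarrow> nat \<Rightarrow> (nat \<Rightarrow> real) \<Rightarrow> real" where
  "block_form P W xi a v =
     (\<Sum>(i,j)\<in>pE P a a. qf_row P a a i j 0 0 v)
     + (\<Sum>b\<in>{..<pA P} - {a}. \<Sum>(i,j)\<in>pE P a b. W a b i j * pf_row_src P a b i j 0 v)
     + (\<Sum>b\<in>{..<pA P} - {a}. \<Sum>(i,j)\<in>pE P b a. W b a i j * pf_row_tgt P b a i j 0 v)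
     + xi * (\<Sum>m<bdim P a. (v m)\<^sup>2)"

definition majorant_form ::
    "pgo_data \<Rightarrow> (nat \<Rightarrow> nat \<Rightarrow> nat \<Rightarrow> nat \<Rightarrow> real) \<Rightarrow> real \<Rightarrow> (nat \<Rightarrow> real) \<Rightarrow> real" where
  "majorant_form P W xi v = (\<Sum>a<pA P. block_form P W xi a (\<lambda>m. v (boff P a + m)))"

definition weighted_qf_form ::
    "pgo_data \<Rightarrow> (nat \<Rightarrow> nat \<Rightarrow> nat \<Rightarrow> nat \<Rightarrow> real) \<Rightarrow> (nat \<Rightarrow> real) \<Rightarrow> real" where
  "weighted_qf_form P W v = edge_sum P (\<lambda>a b i j.
     (if a = b then 1 else W a b i j) * qf_row P a b i j (boff P a) (boff P b) v)"

lemma quadratic_form_block_form: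
  assumes wf: "well_formed P" and a: "a < pA P"
  shows "quadratic_form (bdim P a) (block_form P W xi a)"
proof -
  have e: "is_edge P a' b' i j" if "a' < pA P" "b' < pA P" "(i,j) \<in> pE P a' b'" for a' b' i j
    using that unfolding is_edge_def by auto
  note bounds = rot_col_bound pose_col_bound
  have "quadratic_form (bdim P a) (\<lambda>v. \<Sum>(i,j)\<in>pE P a a. qf_row P a a i j 0 0 v)"
    unfolding case_prod_unfold
  proof (rule quadratic_form_sum)
    fix p assume "p \<in> pE P a a"
    then show "quadratic_form (bdim P a) (\<lambda>v. qf_row P a a (fst p) (snd p) 0 0 v)"
      using is_edge_data(1,2)[OF wf e[OF a a]] by (cases p) (auto intro!: quadratic_form_qf_row bounds)
  qed
  moreover have "quadratic_form (bdim P a)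
      (\<lambda>v. \<Sum>b\<in>{..<pA P} - {a}. \<Sum>(i,j)\<in>pE P a b. W a b i j * pf_row_src P a b i j 0 v)"
    unfolding case_prod_unfold
  proof (intro quadratic_form_sum quadratic_form_scale)
    fix b p assume "b \<in> {..<pA P} - {a}" "p \<in> pE P a b"
    then show "quadratic_form (bdim P a) (pf_row_src P a b (fst p) (snd p) 0)"
      using is_edge_data(1)[OF wf e[OF a]] by (cases p) (auto intro!: quadratic_form_pf_row_src bounds)
  qed
  moreover have "quadratic_form (bdim P a)
      (\<lambda>v. \<Sum>b\<in>{..<pA P} - {a}. \<Sum>(i,j)\<in>pE P b a. W b a i j * pf_row_tgt P b a i j 0 v)"
    unfolding case_prod_unfold
  proof (intro quadratic_form_sum quadratic_form_scale)
    fix b p assume "b \<in> {..<pA P} - {a}" "p \<in> pE P b a"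
    then show "quadratic_form (bdim P a) (pf_row_tgt P b a (fst p) (snd p) 0)"
      using is_edge_data(2)[OF wf e[of b a]] a by (cases p) (auto intro!: quadratic_form_pf_row_tgt bounds)
  qed
  moreover have "quadratic_form (bdim P a) (\<lambda>v. xi * (\<Sum>m<bdim P a. (v m)\<^sup>2))"
    by (intro quadratic_form_scale quadratic_form_sum quadratic_form_power2 linear_form_coord) auto
  ultimately show ?thesis unfolding block_form_def by (intro quadratic_form_add)
qed

lemma block_form_nonneg:
  assumes wf: "well_formed P" and W: "\<And>a b i j. is_edge P a b i j \<Longrightarrow> W a b i j \<ge> 0"
    and xi: "xi \<ge> 0" and a: "a < pA P"
  shows "block_form P W xi a v \<ge> 0"
proof -
  have coeffs: "pkap P a' b' i j \<ge> 0" "ptau P a' b' i j \<ge> 0" "W a' b' i j \<ge> 0"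
    if "a' < pA P" "b' < pA P" "(i,j) \<in> pE P a' b'" for a' b' i j
    using is_edge_data(5,6)[OF wf] W that unfolding is_edge_def by blast+
  have "0 \<le> (\<Sum>(i,j)\<in>pE P a a. qf_row P a a i j 0 0 v)"
    by (intro sum_nonneg) (use coeffs a in \<open>auto intro!: qf_row_nonneg\<close>)
  moreover have "0 \<le> (\<Sum>b\<in>{..<pA P} - {a}. \<Sum>(i,j)\<in>pE P a b. W a b i j * pf_row_src P a b i j 0 v)"
    by (intro sum_nonneg) (use coeffs a in \<open>auto intro!: pf_row_src_nonneg mult_nonneg_nonneg\<close>)
  moreover have "0 \<le> (\<Sum>b\<in>{..<pA P} - {a}. \<Sum>(i,j)\<in>pE P b a. W b a i j * pf_row_tgt P b a i j 0 v)"
    by (intro sum_nonneg) (use coeffs a in \<open>auto intro!: pf_row_tgt_nonneg mult_nonneg_nonneg\<close>)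
  moreover have "0 \<le> xi * (\<Sum>m<bdim P a. (v m)\<^sup>2)" using xi by (intro mult_nonneg_nonneg sum_nonneg) auto
  ultimately show ?thesis unfolding block_form_def by linarith
qed

lemma quadratic_form_majorant_form:
  "well_formed P \<Longrightarrow> quadratic_form (ncols P) (majorant_form P W xi)"
  unfolding majorant_form_def ncols_eq_sum_bdim boff_def
  by (rule quadratic_form_block_sum) (auto intro: quadratic_form_block_form)

lemma blockdiag_form_mat_block_form:
  "well_formed P \<Longrightarrow>
     blockdiag P (\<lambda>a. form_mat (bdim P a) (block_form P W xi a)) = form_mat (ncols P) (majorant_form P W xi)"
  unfolding blockdiag_def majorant_form_def ncols_eq_sum_bdim boff_def
  by (rule diag_block_mat_form_mat) (auto intro: quadratic_form_block_form)

lemma sum_offdiag_swap: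
  "(\<Sum>a<A. \<Sum>b\<in>{..<A} - {a}. g a b) = (\<Sum>a<(A::nat). \<Sum>b\<in>{..<A} - {a}. (g b a :: real))"
proof -
  have "{y. y \<in> {..<A} \<and> x \<noteq> y} = {..<A} - {x}" "{y. y \<in> {..<A} \<and> y \<noteq> x} = {..<A} - {x}" for x
    by auto
  then show ?thesis using sum.swap_restrict[of "{..<A}" "{..<A}" g "\<lambda>a b. a \<noteq> b"] by simp
qed

lemma majorant_form_eq_edge_sum:
  "majorant_form P W xi v = edge_sum P (\<lambda>a b i j.
      if a = b then qf_row P a b i j (boff P a) (boff P b) v
      else W a b i j * (pf_row_src P a b i j (boff P a) v + pf_row_tgt P a b i j (boff P b) v))
    + xi * (\<Sum>m<ncols P. (v m)\<^sup>2)"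
proof -
  have prox: "(\<Sum>a<pA P. \<Sum>m<bdim P a. (v (boff P a + m))\<^sup>2) = (\<Sum>m<ncols P. (v m)\<^sup>2)"
    unfolding ncols_eq_sum_bdim boff_def by (rule sum_lessThan_blocks[symmetric])
  have tgt: "(\<Sum>a<pA P. \<Sum>b\<in>{..<pA P} - {a}. \<Sum>(i,j)\<in>pE P b a. W b a i j * pf_row_tgt P b a i j (boff P a) v) =
      (\<Sum>a<pA P. \<Sum>b\<in>{..<pA P} - {a}. \<Sum>(i,j)\<in>pE P a b. W a b i j * pf_row_tgt P a b i j (boff P b) v)"
    by (rule sum_offdiag_swap)
  show ?thesis
    unfolding majorant_form_def block_form_def qf_row_shift pf_row_src_shift pf_row_tgt_shift
      sum.distrib tgt edge_sum_if
    by (simp add: sum.distrib sum_distrib_left[symmetric] prox[symmetric] distrib_left case_prod_unfold)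
qed

lemma majorant_form_nonneg:
  assumes wf: "well_formed P" and W: "\<And>a b i j. is_edge P a b i j \<Longrightarrow> W a b i j \<ge> 0"
    and xi: "xi \<ge> 0"
  shows "majorant_form P W xi v \<ge> 0"
  unfolding majorant_form_def by (intro sum_nonneg block_form_nonneg[OF wf W xi]) auto

lemma majorant_form_mono_weights:
  assumes wf: "well_formed P"
    and W: "\<And>a b i j. is_edge P a b i j \<Longrightarrow> 0 \<le> W a b i j \<and> W a b i j \<le> W' a b i j"
  shows "majorant_form P W xi v \<le> majorant_form P W' xi v"
  unfolding majorant_form_eq_edge_sum
proof (intro add_right_mono edge_sum_mono)
  fix a b i j assume e: "is_edge P a b i j"
  have "0 \<le> pf_row_src P a b i j (boff P a) v + pf_row_tgt P a b i j (boff P b) v"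
    using is_edge_data(5,6)[OF wf e] by (intro add_nonneg_nonneg pf_row_src_nonneg pf_row_tgt_nonneg)
  then show "(if a = b then qf_row P a b i j (boff P a) (boff P b) v
      else W a b i j * (pf_row_src P a b i j (boff P a) v + pf_row_tgt P a b i j (boff P b) v))
    \<le> (if a = b then qf_row P a b i j (boff P a) (boff P b) v
      else W' a b i j * (pf_row_src P a b i j (boff P a) v + pf_row_tgt P a b i j (boff P b) v))"
    using W[OF e] by (auto intro: mult_right_mono)
qed

lemma quadratic_form_weighted_qf_form:
  "well_formed P \<Longrightarrow> quadratic_form (ncols P) (weighted_qf_form P W)"
  unfolding weighted_qf_form_def
  by (intro quadratic_form_edge_sum quadratic_form_scale quadratic_form_qf_row_edge)

lemma weighted_qf_form_le_majorant_form:
  assumes wf: "well_formed P" and W: "\<And>a b i j. is_edge P a b i j \<Longrightarrow> W a b i j \<ge> 0"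
    and xi: "xi \<ge> 0"
  shows "weighted_qf_form P W v \<le> majorant_form P W xi v"
proof -
  have "weighted_qf_form P W v \<le> edge_sum P (\<lambda>a b i j.
      if a = b then qf_row P a b i j (boff P a) (boff P b) v
      else W a b i j * (pf_row_src P a b i j (boff P a) v + pf_row_tgt P a b i j (boff P b) v))"
    unfolding weighted_qf_form_def
  proof (rule edge_sum_mono)
    fix a b i j assume e: "is_edge P a b i j"
    show "(if a = b then 1 else W a b i j) * qf_row P a b i j (boff P a) (boff P b) v
      \<le> (if a = b then qf_row P a b i j (boff P a) (boff P b) v
      else W a b i j * (pf_row_src P a b i j (boff P a) v + pf_row_tgt P a b i j (boff P b) v))"
      using mult_left_mono[OF qf_row_le_pf_rows[OF is_edge_data(5,6,3)[OF wf e]] W[OF e]] by auto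
  qed
  moreover have "0 \<le> xi * (\<Sum>m<ncols P. (v m)\<^sup>2)" using xi by (intro mult_nonneg_nonneg sum_nonneg) auto
  ultimately show ?thesis unfolding majorant_form_eq_edge_sum by linarith
qed

lemma row_sum_majorant_form:
  assumes wf: "well_formed P" and Y: "Y \<in> carrier_mat (pd P) (ncols P)"
  shows "row_sum (pd P) (majorant_form P W xi) Y =
    edge_sum P (\<lambda>a b i j. if a = b then qf P a b i j Y else W a b i j * pf P a b i j Y) + xi * fro_sq Y"
proof -
  have "row_sum (pd P) (majorant_form P W xi) Y =
      edge_sum P (\<lambda>a b i j. \<Sum>r<pd P. if a = b then qf_row P a b i j (boff P a) (boff P b) (\<lambda>m. Y $$ (r,m))
        else W a b i j * (pf_row_src P a b i j (boff P a) (\<lambda>m. Y $$ (r,m))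
          + pf_row_tgt P a b i j (boff P b) (\<lambda>m. Y $$ (r,m))))
      + xi * (\<Sum>r<pd P. \<Sum>m<ncols P. (Y $$ (r,m))\<^sup>2)"
    unfolding row_sum_def majorant_form_eq_edge_sum edge_sum_sum
    by (simp add: sum.distrib sum_distrib_left)
  also have "\<dots> = edge_sum P (\<lambda>a b i j. if a = b then qf P a b i j Y else W a b i j * pf P a b i j Y)
      + xi * fro_sq Y"
    using Y qf_eq_row_sum[OF is_edge_data(7,4)[OF wf]] pf_eq_row_sum[OF is_edge_data(4)[OF wf]]
    by (intro arg_cong2[where f="(+)"] edge_sum_cong)
      (auto simp: row_sum_def sum_distrib_left fro_sq_sum_power2)
  finally show ?thesis .
qed

lemma row_sum_weighted_qf_form:
  assumes "well_formed P"
  shows "row_sum (pd P) (weighted_qf_form P W) Y =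
    edge_sum P (\<lambda>a b i j. (if a = b then 1 else W a b i j) * qf P a b i j Y)"
  unfolding weighted_qf_form_def row_sum_def edge_sum_sum[symmetric]
  using qf_eq_row_sum[OF is_edge_data(7,4)[OF assms]]
  by (intro edge_sum_cong) (simp add: row_sum_def sum_distrib_left)

lemma blk_minus:
  assumes "X \<in> carrier_mat (pd P) (ncols P)" "Y \<in> carrier_mat (pd P) (ncols P)" "a < pA P"
  shows "blk P X a - blk P Y a = blk P (X - Y) a"
  using assms block_end_le_ncols[OF assms(3)] by (intro eq_matI) (auto simp: blk_def)

lemma sum_mat_inner_blk:
  assumes G: "G \<in> carrier_mat (pd P) (ncols P)"
  shows "(\<Sum>a<pA P. mat_inner (blk P G a) (blk P H a)) = mat_inner G H"
proof -
  have "(\<Sum>a<pA P. mat_inner (blk P G a) (blk P H a)) =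
      (\<Sum>a<pA P. \<Sum>r<pd P. \<Sum>c<bdim P a. G $$ (r, boff P a + c) * H $$ (r, boff P a + c))"
    unfolding mat_inner_def blk_def by simp
  also have "\<dots> = (\<Sum>r<pd P. \<Sum>a<pA P. \<Sum>c<bdim P a. G $$ (r, boff P a + c) * H $$ (r, boff P a + c))"
    by (rule sum.swap)
  also have "\<dots> = mat_inner G H"
    unfolding mat_inner_carrier[OF G] ncols_eq_sum_bdim boff_def by (simp add: sum_lessThan_blocks)
  finally show ?thesis .
qed

lemma sum_wnorm_sq_blk_block_form:
  assumes wf: "well_formed P" and Y: "Y \<in> carrier_mat (pd P) (ncols P)"
  shows "(\<Sum>a<pA P. wnorm_sq (form_mat (bdim P a) (block_form P W xi a)) (blk P Y a))
      = wnorm_sq (form_mat (ncols P) (majorant_form P W xi)) Y"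
proof -
  have "wnorm_sq (form_mat (bdim P a) (block_form P W xi a)) (blk P Y a) =
      (\<Sum>r<pd P. block_form P W xi a (\<lambda>m. Y $$ (r, boff P a + m)))" if "a < pA P" for a
    unfolding wnorm_sq_form_mat[OF quadratic_form_block_form[OF wf that] blk_carrier] row_sum_def
    by (intro sum.cong refl quadratic_form_cong[OF quadratic_form_block_form[OF wf that]])
      (auto simp: blk_def)
  then have "(\<Sum>a<pA P. wnorm_sq (form_mat (bdim P a) (block_form P W xi a)) (blk P Y a)) =
      (\<Sum>a<pA P. \<Sum>r<pd P. block_form P W xi a (\<lambda>m. Y $$ (r, boff P a + m)))"
    by (intro sum.cong) auto
  also have "\<dots> = (\<Sum>r<pd P. \<Sum>a<pA P. block_form P W xi a (\<lambda>m. Y $$ (r, boff P a + m)))"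
    by (rule sum.swap)
  also have "\<dots> = wnorm_sq (form_mat (ncols P) (majorant_form P W xi)) Y"
    unfolding wnorm_sq_form_mat[OF quadratic_form_majorant_form[OF wf] Y] row_sum_def majorant_form_def ..
  finally show ?thesis .
qed

section \<open>Expansion of F and G around the anchor\<close>

context
  fixes P :: pgo_data and rho rho' :: "real \<Rightarrow> real" and Xk :: "real mat"
  assumes wf: "well_formed P" and lk: "loss_kernel rho rho'"
    and Xk: "Xk \<in> carrier_mat (pd P) (ncols P)"
begin

lemma rho_deriv: "s \<ge> 0 \<Longrightarrow> (rho has_real_derivative rho' s) (at s within {0..})"
  and rho_concave: "concave_on {0..} rho"
  using lk unfolding loss_kernel_def by auto

lemma qf_expansion:
  assumes e: "is_edge P a b i j"
  obtains L where "has_mderiv (pd P) (ncols P) (qf P a b i j) Xk L"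
    and "\<And>Y. Y \<in> carrier_mat (pd P) (ncols P) \<Longrightarrow>
      qf P a b i j Y = qf P a b i j Xk + L (Y - Xk) + qf P a b i j (Y - Xk)"
  using has_mderiv_row_sum[OF quadratic_form_qf_row_edge[OF wf e] Xk]
  unfolding qf_eq_row_sum_edge[OF wf e] by blast

text \<open>In both cases the gradient of F_ij is omega/2 times that of q: for a = b by definition of
  omega, for a \<noteq> b by the chain rule.\<close>

lemma has_mderiv_Fij:
  assumes e: "is_edge P a b i j" and L: "has_mderiv (pd P) (ncols P) (qf P a b i j) Xk L"
  shows "has_mderiv (pd P) (ncols P) (Fij P rho a b i j) Xk (\<lambda>H. omega P rho' Xk a b i j * L H / 2)"
proof (cases "a = b")
  case True
  then show ?thesis
    using has_mderiv_divide[OF L, of 2] by (simp add: Fij_def[abs_def] omega_def)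
next
  case False
  have "has_mderiv (pd P) (ncols P) (\<lambda>Y. rho (qf P a b i j Y)) Xk (\<lambda>H. rho' (qf P a b i j Xk) * L H)"
    using qf_nonneg[OF wf e]
    by (intro has_mderiv_compose_nonneg[OF L Xk] rho_deriv) auto
  from has_mderiv_divide[OF this, of 2] False show ?thesis
    by (simp add: Fij_def[abs_def] omega_def)
qed

lemma mat_inner_gradX_Fij:
  assumes e: "is_edge P a b i j" and L: "has_mderiv (pd P) (ncols P) (qf P a b i j) Xk L"
    and H: "H \<in> carrier_mat (pd P) (ncols P)"
  shows "mat_inner (gradX P (Fij P rho a b i j) Xk) H = omega P rho' Xk a b i j * L H / 2"
  unfolding gradX_def by (rule has_mderiv_mgrad(2)[OF has_mderiv_Fij[OF e L] H])

lemma Fij_intra_expansion: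
  assumes e: "is_edge P a a i j" and X: "X \<in> carrier_mat (pd P) (ncols P)"
  shows "Fij P rho a a i j X =
    Fij P rho a a i j Xk + mat_inner (gradX P (Fij P rho a a i j) Xk) (X - Xk) + qf P a a i j (X - Xk) / 2"
proof -
  obtain L where L: "has_mderiv (pd P) (ncols P) (qf P a a i j) Xk L"
    and "\<And>Y. Y \<in> carrier_mat (pd P) (ncols P) \<Longrightarrow>
      qf P a a i j Y = qf P a a i j Xk + L (Y - Xk) + qf P a a i j (Y - Xk)"
    using qf_expansion[OF e] by blast
  from this(2)[OF X] have ex: "qf P a a i j X = qf P a a i j Xk + L (X - Xk) + qf P a a i j (X - Xk)" .
  have "X - Xk \<in> carrier_mat (pd P) (ncols P)" using Xk by (rule minus_carrier_mat)
  from mat_inner_gradX_Fij[OF e L this] show ?thesis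
    using ex by (simp add: Fij_def omega_def add_divide_distrib)
qed

text \<open>Concavity of rho bounds rho (q X) by its tangent at q Xk, and q \<le> p bounds the
  quadratic remainder of q.\<close>

lemma Fij_le_Eij:
  assumes e: "is_edge P a b i j" and ab: "a \<noteq> b" and X: "X \<in> carrier_mat (pd P) (ncols P)"
  shows "Fij P rho a b i j X \<le> Eij P rho rho' a b i j X Xk"
proof -
  obtain L where L: "has_mderiv (pd P) (ncols P) (qf P a b i j) Xk L"
    and "\<And>Y. Y \<in> carrier_mat (pd P) (ncols P) \<Longrightarrow>
      qf P a b i j Y = qf P a b i j Xk + L (Y - Xk) + qf P a b i j (Y - Xk)"
    using qf_expansion[OF e] by blast
  from this(2)[OF X] have ex: "qf P a b i j X = qf P a b i j Xk + L (X - Xk) + qf P a b i j (X - Xk)" .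
  let ?w = "rho' (qf P a b i j Xk)"
  have w: "0 \<le> ?w" using omega_bounds(1)[OF wf lk e] ab by (simp add: omega_def)
  have tangent: "rho (qf P a b i j X) \<le> rho (qf P a b i j Xk) + ?w * (qf P a b i j X - qf P a b i j Xk)"
    using qf_nonneg[OF wf e]
    by (intro concave_on_le_tangent[OF rho_concave rho_deriv]) auto
  have "qf P a b i j X - qf P a b i j Xk \<le> L (X - Xk) + pf P a b i j (X - Xk)"
    using ex qf_le_pf[OF wf e, of "X - Xk"] by simp
  from mult_left_mono[OF this w] tangent
  have "rho (qf P a b i j X) \<le> rho (qf P a b i j Xk) + ?w * L (X - Xk) + ?w * pf P a b i j (X - Xk)"
    by (simp add: algebra_simps)
  moreover have "X - Xk \<in> carrier_mat (pd P) (ncols P)" using Xk by (rule minus_carrier_mat)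
  ultimately show ?thesis
    unfolding Eij_def using mat_inner_gradX_Fij[OF e L] ab by (simp add: Fij_def omega_def field_simps)
qed

lemma has_mderiv_Fobj:
  "has_mderiv (pd P) (ncols P) (Fobj P rho) Xk
     (\<lambda>H. edge_sum P (\<lambda>a b i j. mat_inner (gradX P (Fij P rho a b i j) Xk) H))"
  unfolding Fobj_eq_edge_sum[abs_def]
proof (rule has_mderiv_edge_sum)
  fix a b i j assume e: "is_edge P a b i j"
  obtain L where "has_mderiv (pd P) (ncols P) (qf P a b i j) Xk L" using qf_expansion[OF e] by blast
  from has_mderiv_mgrad_self[OF has_mderiv_Fij[OF e this]]
  show "has_mderiv (pd P) (ncols P) (Fij P rho a b i j) Xk (mat_inner (gradX P (Fij P rho a b i j) Xk))"
    by (simp add: gradX_def)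
qed

lemma gradX_Fobj_carrier: "gradX P (Fobj P rho) Xk \<in> carrier_mat (pd P) (ncols P)"
  by (rule has_mderiv_mgrad(1)[OF has_mderiv_Fobj, folded gradX_def])

lemma mat_inner_gradX_Fobj:
  "H \<in> carrier_mat (pd P) (ncols P) \<Longrightarrow> mat_inner (gradX P (Fobj P rho) Xk) H =
     edge_sum P (\<lambda>a b i j. mat_inner (gradX P (Fij P rho a b i j) Xk) H)"
  by (rule has_mderiv_mgrad(2)[OF has_mderiv_Fobj, folded gradX_def])

lemma Gsur_eq_majorant_form:
  assumes X: "X \<in> carrier_mat (pd P) (ncols P)"
  shows "Gsur P rho rho' xi X Xk =
    wnorm_sq (form_mat (ncols P) (majorant_form P (omega P rho' Xk) xi)) (X - Xk) / 2
    + mat_inner (gradX P (Fobj P rho) Xk) (X - Xk) + Fobj P rho Xk"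
proof -
  let ?W = "omega P rho' Xk"
  let ?rem = "\<lambda>a b i j. if a = b then qf P a b i j (X - Xk) else ?W a b i j * pf P a b i j (X - Xk)"
  have D: "X - Xk \<in> carrier_mat (pd P) (ncols P)" using Xk by (rule minus_carrier_mat)
  have "edge_sum P (\<lambda>a b i j. if a = b then Fij P rho a b i j X else Eij P rho rho' a b i j X Xk) =
      edge_sum P (\<lambda>a b i j. Fij P rho a b i j Xk + mat_inner (gradX P (Fij P rho a b i j) Xk) (X - Xk)
        + ?rem a b i j / 2)"
    using Fij_intra_expansion[OF _ X] by (intro edge_sum_cong) (auto simp: Eij_def)
  also have "\<dots> = Fobj P rho Xk + mat_inner (gradX P (Fobj P rho) Xk) (X - Xk) + edge_sum P ?rem / 2"
    unfolding edge_sum_add edge_sum_divide Fobj_eq_edge_sum mat_inner_gradX_Fobj[OF D] ..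
  also have "edge_sum P ?rem = wnorm_sq (form_mat (ncols P) (majorant_form P ?W xi)) (X - Xk)
      - xi * fro_sq (X - Xk)"
    unfolding wnorm_sq_form_mat[OF quadratic_form_majorant_form[OF wf] D] row_sum_majorant_form[OF wf D]
    by simp
  finally show ?thesis unfolding Gsur_eq_edge_sum by (simp add: field_simps)
qed

lemma Fobj_le_Gsur:
  assumes xi: "xi \<ge> 0" and X: "X \<in> carrier_mat (pd P) (ncols P)"
  shows "Fobj P rho X \<le> Gsur P rho rho' xi X Xk"
proof -
  have "Fobj P rho X \<le> edge_sum P (\<lambda>a b i j. if a = b then Fij P rho a b i j X else Eij P rho rho' a b i j X Xk)"
    unfolding Fobj_eq_edge_sum using Fij_le_Eij[OF _ _ X] by (intro edge_sum_mono) auto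
  moreover have "0 \<le> xi / 2 * fro_sq (X - Xk)"
    using xi fro_sq_nonneg by simp
  ultimately show ?thesis unfolding Gsur_eq_edge_sum by linarith
qed

lemma Gsur_anchor: "Gsur P rho rho' xi Xk Xk = Fobj P rho Xk"
proof -
  have "Xk - Xk = 0\<^sub>m (pd P) (ncols P)" using Xk by (intro eq_matI) auto
  moreover have "0\<^sub>m (pd P) (ncols P) * form_mat (ncols P) f \<in> carrier_mat (pd P) (ncols P)" for f
    by simp
  ultimately show ?thesis
    using Gsur_eq_majorant_form[OF Xk] gradX_Fobj_carrier by (simp add: wnorm_sq_def mat_inner_zero_right)
qed

lemma sum_Gblk_eq:
  assumes X: "X \<in> carrier_mat (pd P) (ncols P)"
  shows "(\<Sum>a<pA P. Gblk P rho (form_mat (bdim P a) (block_form P W xi a)) a X Xk) =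
    wnorm_sq (form_mat (ncols P) (majorant_form P W xi)) (X - Xk) / 2
    + mat_inner (gradX P (Fobj P rho) Xk) (X - Xk)"
proof -
  have D: "X - Xk \<in> carrier_mat (pd P) (ncols P)" using Xk by (rule minus_carrier_mat)
  show ?thesis
    unfolding Gblk_def sum.distrib sum_divide_distrib[symmetric]
    by (simp add: blk_minus[OF X Xk] sum_wnorm_sq_blk_block_form[OF wf D]
        sum_mat_inner_blk[OF gradX_Fobj_carrier])
qed

lemma Mk_quadratic_form:
  "Mk P rho' Xk \<in> carrier_mat (ncols P) (ncols P) \<and> transpose_mat (Mk P rho' Xk) = Mk P rho' Xk \<and>
   (\<forall>Y \<in> carrier_mat (pd P) (ncols P).
      wnorm_sq (Mk P rho' Xk) Y = row_sum (pd P) (weighted_qf_form P (omega P rho' Xk)) Y)"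
proof -
  let ?M = "form_mat (ncols P) (weighted_qf_form P (omega P rho' Xk))"
  let ?spec = "\<lambda>M. M \<in> carrier_mat (ncols P) (ncols P) \<and> transpose_mat M = M \<and>
     (\<forall>Y \<in> carrier_mat (pd P) (ncols P). wnorm_sq M Y =
        (\<Sum>a<pA P. \<Sum>(i,j) \<in> pE P a a. qf P a a i j Y) +
        (\<Sum>a<pA P. \<Sum>b \<in> {..<pA P} - {a}. \<Sum>(i,j) \<in> pE P a b. omega P rho' Xk a b i j * qf P a b i j Y))"
  have rows: "row_sum (pd P) (weighted_qf_form P (omega P rho' Xk)) Y =
      (\<Sum>a<pA P. \<Sum>(i,j) \<in> pE P a a. qf P a a i j Y) +
      (\<Sum>a<pA P. \<Sum>b \<in> {..<pA P} - {a}. \<Sum>(i,j) \<in> pE P a b. omega P rho' Xk a b i j * qf P a b i j Y)" for Y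
    unfolding row_sum_weighted_qf_form[OF wf] by (simp add: edge_sum_def)
  have "?spec ?M"
    by (intro conjI form_mat_carrier transpose_form_mat ballI, unfold rows[symmetric])
      (erule wnorm_sq_form_mat[OF quadratic_form_weighted_qf_form[OF wf]])
  then have "?spec (Mk P rho' Xk)" unfolding Mk_def by (rule someI[of ?spec])
  then show ?thesis unfolding rows .
qed

lemma scalar_prod_Mk:
  assumes v: "v \<in> carrier_vec (ncols P)"
  shows "v \<bullet> (Mk P rho' Xk *\<^sub>v v) = weighted_qf_form P (omega P rho' Xk) (\<lambda>m. v $ m)"
proof -
  let ?N = "ncols P" and ?M = "Mk P rho' Xk" and ?f = "weighted_qf_form P (omega P rho' Xk)"
  let ?Y = "first_row_mat (pd P) ?N v"
  have Mc: "?M \<in> carrier_mat ?N ?N" using Mk_quadratic_form by auto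
  have d: "0 < pd P" using wf unfolding well_formed_def by auto
  have Y: "?Y \<in> carrier_mat (pd P) ?N" unfolding first_row_mat_def by simp
  have q: "quadratic_form ?N ?f" by (rule quadratic_form_weighted_qf_form[OF wf])
  have "v \<bullet> (?M *\<^sub>v v) = wnorm_sq ?M ?Y" by (rule scalar_prod_eq_wnorm_sq_first_row[OF Mc v d])
  also have "\<dots> = wnorm_sq (form_mat ?N ?f) ?Y"
    using Mk_quadratic_form Y by (simp add: wnorm_sq_form_mat[OF q Y])
  also have "\<dots> = v \<bullet> (form_mat ?N ?f *\<^sub>v v)"
    by (rule scalar_prod_eq_wnorm_sq_first_row[OF form_mat_carrier v d, symmetric])
  also have "\<dots> = ?f (\<lambda>m. v $ m)" by (rule scalar_prod_form_mat[OF q v])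
  finally show ?thesis .
qed

lemma loewner_ge_majorant_Mk:
  assumes xi: "xi \<ge> 0"
  shows "loewner_ge (ncols P) (form_mat (ncols P) (majorant_form P (omega P rho' Xk) xi)) (Mk P rho' Xk)"
  using Mk_quadratic_form scalar_prod_Mk
    weighted_qf_form_le_majorant_form[OF wf omega_bounds(1)[OF wf lk] xi]
  by (intro loewner_ge_form_mat_left quadratic_form_majorant_form[OF wf]) auto

end

theorem proposition3:
  fixes P :: pgo_data and rho rho' :: "real \<Rightarrow> real" and xi :: real
  assumes wf: "well_formed P"
    and lk: "loss_kernel rho rho'"
    and xi: "xi \<ge> 0"
  shows "\<exists>Gam. psd (ncols P) Gam \<and>
    (\<forall>Xk \<in> feasible P. \<exists>Gs.
       (\<forall>a < pA P. psd (bdim P a) (Gs a)) \<and>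
       (\<forall>X \<in> carrier_mat (pd P) (ncols P).
          Gsur P rho rho' xi X Xk = (\<Sum>a<pA P. Gblk P rho (Gs a) a X Xk) + Fobj P rho Xk) \<and>
       (\<forall>X \<in> carrier_mat (pd P) (ncols P).
          Gsur P rho rho' xi X Xk =
            wnorm_sq (blockdiag P Gs) (X - Xk) / 2 + mat_inner (gradX P (Fobj P rho) Xk) (X - Xk)
            + Fobj P rho Xk) \<and>
       (\<forall>X \<in> carrier_mat (pd P) (ncols P). Gsur P rho rho' xi X Xk \<ge> Fobj P rho X) \<and>
       Gsur P rho rho' xi Xk Xk = Fobj P rho Xk \<and>
       loewner_ge (ncols P) (blockdiag P Gs) (Mk P rho' Xk) \<and>
       loewner_ge (ncols P) Gam (blockdiag P Gs))"
proof (intro exI conjI ballI)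
  let ?N = "ncols P"
  show "psd ?N (form_mat ?N (majorant_form P (\<lambda>a b i j. 1) xi))"
    using majorant_form_nonneg[OF wf _ xi] by (intro psd_form_mat quadratic_form_majorant_form[OF wf]) auto
  fix Xk assume "Xk \<in> feasible P"
  then have Xk: "Xk \<in> carrier_mat (pd P) ?N" by (simp add: feasible_def)
  let ?Gs = "\<lambda>a. form_mat (bdim P a) (block_form P (omega P rho' Xk) xi a)"
  note BD = blockdiag_form_mat_block_form[OF wf]
  note W = omega_bounds[OF wf lk]
  show "\<forall>a < pA P. psd (bdim P a) (?Gs a)"
    using block_form_nonneg[OF wf W(1) xi] quadratic_form_block_form[OF wf] by (auto intro!: psd_form_mat)
  show "Gsur P rho rho' xi X Xk = (\<Sum>a<pA P. Gblk P rho (?Gs a) a X Xk) + Fobj P rho Xk"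
    if "X \<in> carrier_mat (pd P) ?N" for X
    using Gsur_eq_majorant_form[OF wf lk Xk that] sum_Gblk_eq[OF wf lk Xk that] by simp
  show "Gsur P rho rho' xi X Xk = wnorm_sq (blockdiag P ?Gs) (X - Xk) / 2
      + mat_inner (gradX P (Fobj P rho) Xk) (X - Xk) + Fobj P rho Xk"
    if "X \<in> carrier_mat (pd P) ?N" for X
    unfolding BD by (rule Gsur_eq_majorant_form[OF wf lk Xk that])
  show "Fobj P rho X \<le> Gsur P rho rho' xi X Xk" if "X \<in> carrier_mat (pd P) ?N" for X
    by (rule Fobj_le_Gsur[OF wf lk Xk xi that])
  show "Gsur P rho rho' xi Xk Xk = Fobj P rho Xk"
    by (rule Gsur_anchor[OF wf lk Xk])
  show "loewner_ge ?N (blockdiag P ?Gs) (Mk P rho' Xk)"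
    unfolding BD by (rule loewner_ge_majorant_Mk[OF wf lk Xk xi])
  show "loewner_ge ?N (form_mat ?N (majorant_form P (\<lambda>a b i j. 1) xi)) (blockdiag P ?Gs)"
    unfolding BD using W
    by (intro loewner_ge_form_mat quadratic_form_majorant_form[OF wf] majorant_form_mono_weights[OF wf]) auto
qed

end
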